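(* Let $(\mathcal{C},P)$ be a heaco. Then $(\mathcal{C},P)$ is implicational if and only if $(\mathcal{C},P)$ is a tripos.
   Context: A doctrine is a pair $(\mathcal{C},P)$, $\mathcal{C}$ a category with finite products, $P:\mathcal{C}^{op}\to\mathbf{Pos}$ a functor, $f^*=P(f)$; primary: each $P(A)$ has binary meets preserved by each $f^*$. Elementary: primary and for every $A$ there is $\delta_A\in P(A\times A)$ such that for every $X$ the assignment $\psi\mapsto\langle\pi_1,\pi_2\rangle^*\psi\wedge\langle\pi_2,\pi_3\rangle^*\delta_A$ is a left adjoint $P(X\times A)\to P(X\times A\times A)$ to $(id_X\times\Delta_A)^*$. Graph of $f:X\to A$: $\mathcal{G}(f)=(f\times id_A)^*\delta_A$. Stable initial object: initial $0$ with $X\times0\cong0$ for all $X$. AC: for every $A$ not stable initial and every $\Gamma$, $\pi_\Gamma^*$ ($\pi_\Gamma:\Gamma\times A\to\Gamma$) has a left adjoint $\Sigma_{\pi_\Gamma}$ and each $\psi\in P(\Gamma\times A)$ has a chosen $\epsilon_\psi:\Gamma\to A$ with $\Sigma_{\pi_\Gamma}\psi=\langle id_\Gamma,\epsilon_\psi\rangle^*\psi$ (also with factors swapped). Co-comprehension: each $P(A)$ has a bottom and each $\alpha$ has $\lceil\alpha\rceil:\{\alpha\}^o\to A$ with $\lceil\alpha\rceil^*\alpha=\bot$, universal among $f$ with $f^*\alpha=\bot$; full if $\lceil\beta\rceil$ factoring through $\lceil\alpha\rceil$ implies $\alpha\le\beta$. An eaco is an elementary doctrine with full co-comprehension satisfying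 AC such that for every $f:X\to A$, $\alpha\in P(A)$: $f^*\langle\epsilon_{\mathcal{G}(\lceil\alpha\rceil)},id_A\rangle^*\mathcal{G}(\lceil\alpha\rceil)=\langle\epsilon_{\mathcal{G}(\lceil f^*\alpha\rceil)},id_X\rangle^*\mathcal{G}(\lceil f^*\alpha\rceil)$. Higher order: for every $A$ there are $\mathbb{P}(A)$ and $\in_A\in P(A\times\mathbb{P}(A))$ such that every $\phi\in P(A\times Y)$ equals $(id_A\times\chi_\phi)^*\in_A$ for some $\chi_\phi:Y\to\mathbb{P}(A)$. A heaco is a higher order eaco. Implicational: each $P(A)$ carries an operation $\rightarrow$ with (ii) $f^*(\alpha\rightarrow\beta)=f^*\alpha\rightarrow f^*\beta$; (iii) for every projection $\pi_A:X\times A\to A$, right adjoints $\Pi_{\pi_A}$ of $\pi_A^*$ exist and $\Pi_{\pi_A}(\pi_A^*\alpha\rightarrow\beta)=\alpha\rightarrow\Pi_{\pi_A}\beta$; (iv) (a) $\phi\le\psi\rightarrow\phi$; (b) $\gamma\rightarrow(\phi\rightarrow\psi)\le(\gamma\rightarrow\phi)\rightarrow(\gamma\rightarrow\psi)$; (c) if $\gamma\le\phi\rightarrow\psi$ and $\gamma\le\phi$ then $\gamma\le\psi$; (d) if $\phi\le\psi$ then $\gamma\le\phi\rightarrow\psi$. A tripos is a doctrine such that (i) each $P(A)$ is a Heyting algebra and each $f^*$ a Heyting homomorphism; (ii) for every product projection $f$, $f^*$ has left and right adjoints $\Sigma_f,\Pi_f$ satisfying Beck–Chevalley ($h^*\Sigma_f\gamma=\Sigma_gk^*\gamma$,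 $h^*\Pi_f\gamma=\Pi_gk^*\gamma$ for pullback squares $h\circ g=f\circ k$); (iii) for each $X$ there is $\delta_X\in P(X\times X)$ with $\top_X\le\Delta_X^*\alpha$ iff $\delta_X\le\alpha$ for all $\alpha\in P(X\times X)$; (iv) it is higher order. *)

theory Defs
  imports Main
begin

text \<open>Objects are the elements of type 'o, arrows the elements of type 'a
  (so every small category can be represented). comp g f is g o f.
  prd A B is the chosen product A x B with projections pr1 A B, pr2 A B
  and pairing pair f g.\<close>

record ('o,'a) fpcat =
  cdom :: "'a \<Rightarrow> 'o"
  ccod :: "'a \<Rightarrow> 'o"
  cid  :: "'o \<Rightarrow> 'a"
  comp :: "'a \<Rightarrow> 'a \<Rightarrow> 'a"
  prd  :: "'o \<Rightarrow> 'o \<Rightarrow> 'o"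
  pr1  :: "'o \<Rightarrow> 'o \<Rightarrow> 'a"
  pr2  :: "'o \<Rightarrow> 'o \<Rightarrow> 'a"
  pair :: "'a \<Rightarrow> 'a \<Rightarrow> 'a"

text \<open>A doctrine: P(A) is the carrier Pr A ordered by Le A; f^* is Re f.\<close>

record ('o,'a,'p) doctrine = "('o,'a) fpcat" +
  Pr :: "'o \<Rightarrow> 'p set"
  Le :: "'o \<Rightarrow> 'p \<Rightarrow> 'p \<Rightarrow> bool"
  Re :: "'a \<Rightarrow> 'p \<Rightarrow> 'p"

type_synonym ('o,'a,'p) doc = "('o,'a,'p) doctrine"

definition hom :: "('o,'a,'p) doc \<Rightarrow> 'a \<Rightarrow> 'o \<Rightarrow> 'o \<Rightarrow> bool" where
  "hom D f X Y \<longleftrightarrow> cdom D f = X \<and> ccod D f = Y"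

definition fp_category :: "('o,'a,'p) doc \<Rightarrow> bool" where
  "fp_category D \<longleftrightarrow>
     (\<forall>X. hom D (cid D X) X X) \<and>
     (\<forall>f g. ccod D f = cdom D g \<longrightarrow> hom D (comp D g f) (cdom D f) (ccod D g)) \<and>
     (\<forall>f. comp D (cid D (ccod D f)) f = f \<and> comp D f (cid D (cdom D f)) = f) \<and>
     (\<forall>f g h. ccod D f = cdom D g \<and> ccod D g = cdom D h \<longrightarrow>
        comp D h (comp D g f) = comp D (comp D h g) f) \<and>
     (\<exists>T. \<forall>X. \<exists>!f. hom D f X T) \<and>
     (\<forall>A B. hom D (pr1 D A B) (prd D A B) A \<and> hom D (pr2 D A B) (prd D A B) B) \<and>
     (\<forall>f g X A B. hom D f X A \<and> hom D g X B \<longrightarrow>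
        hom D (pair D f g) X (prd D A B) \<and>
        comp D (pr1 D A B) (pair D f g) = f \<and> comp D (pr2 D A B) (pair D f g) = g) \<and>
     (\<forall>h X A B. hom D h X (prd D A B) \<longrightarrow>
        h = pair D (comp D (pr1 D A B) h) (comp D (pr2 D A B) h))"

definition fprod :: "('o,'a,'p) doc \<Rightarrow> 'a \<Rightarrow> 'a \<Rightarrow> 'a" where
  "fprod D f g = pair D (comp D f (pr1 D (cdom D f) (cdom D g)))
                        (comp D g (pr2 D (cdom D f) (cdom D g)))"

definition doctrine :: "('o,'a,'p) doc \<Rightarrow> bool" where
  "doctrine D \<longleftrightarrow> fp_category D \<and>
     (\<forall>A. (\<forall>x\<in>Pr D A. Le D A x x) \<and>
          (\<forall>x\<in>Pr D A. \<forall>y\<in>Pr D A. Le D A x y \<and> Le D A y x \<longrightarrow> x = y) \<and>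
          (\<forall>x\<in>Pr D A. \<forall>y\<in>Pr D A. \<forall>z\<in>Pr D A. Le D A x y \<and> Le D A y z \<longrightarrow> Le D A x z)) \<and>
     (\<forall>f. \<forall>x\<in>Pr D (ccod D f). Re D f x \<in> Pr D (cdom D f)) \<and>
     (\<forall>f. \<forall>x\<in>Pr D (ccod D f). \<forall>y\<in>Pr D (ccod D f).
        Le D (ccod D f) x y \<longrightarrow> Le D (cdom D f) (Re D f x) (Re D f y)) \<and>
     (\<forall>A. \<forall>x\<in>Pr D A. Re D (cid D A) x = x) \<and>
     (\<forall>f g. ccod D f = cdom D g \<longrightarrow>
        (\<forall>x\<in>Pr D (ccod D g). Re D (comp D g f) x = Re D f (Re D g x)))"

definition is_meet :: "('o,'a,'p) doc \<Rightarrow> 'o \<Rightarrow> 'p \<Rightarrow> 'p \<Rightarrow> 'p \<Rightarrow> bool" where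
  "is_meet D A x y m \<longleftrightarrow> m \<in> Pr D A \<and> Le D A m x \<and> Le D A m y \<and>
     (\<forall>z\<in>Pr D A. Le D A z x \<and> Le D A z y \<longrightarrow> Le D A z m)"

definition is_join :: "('o,'a,'p) doc \<Rightarrow> 'o \<Rightarrow> 'p \<Rightarrow> 'p \<Rightarrow> 'p \<Rightarrow> bool" where
  "is_join D A x y j \<longleftrightarrow> j \<in> Pr D A \<and> Le D A x j \<and> Le D A y j \<and>
     (\<forall>z\<in>Pr D A. Le D A x z \<and> Le D A y z \<longrightarrow> Le D A j z)"

definition is_top :: "('o,'a,'p) doc \<Rightarrow> 'o \<Rightarrow> 'p \<Rightarrow> bool" where
  "is_top D A t \<longleftrightarrow> t \<in> Pr D A \<and> (\<forall>z\<in>Pr D A. Le D A z t)"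

definition is_bot :: "('o,'a,'p) doc \<Rightarrow> 'o \<Rightarrow> 'p \<Rightarrow> bool" where
  "is_bot D A b \<longleftrightarrow> b \<in> Pr D A \<and> (\<forall>z\<in>Pr D A. Le D A b z)"

definition is_imp :: "('o,'a,'p) doc \<Rightarrow> 'o \<Rightarrow> 'p \<Rightarrow> 'p \<Rightarrow> 'p \<Rightarrow> bool" where
  "is_imp D A x y z \<longleftrightarrow> z \<in> Pr D A \<and>
     (\<forall>w\<in>Pr D A. Le D A w z \<longleftrightarrow> (\<forall>m. is_meet D A w x m \<longrightarrow> Le D A m y))"

definition meet :: "('o,'a,'p) doc \<Rightarrow> 'o \<Rightarrow> 'p \<Rightarrow> 'p \<Rightarrow> 'p" where
  "meet D A x y = (SOME m. is_meet D A x y m)"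

definition top :: "('o,'a,'p) doc \<Rightarrow> 'o \<Rightarrow> 'p" where
  "top D A = (SOME t. is_top D A t)"

definition bot :: "('o,'a,'p) doc \<Rightarrow> 'o \<Rightarrow> 'p" where
  "bot D A = (SOME b. is_bot D A b)"

definition is_ladj :: "('o,'a,'p) doc \<Rightarrow> 'o \<Rightarrow> 'o \<Rightarrow> ('p \<Rightarrow> 'p) \<Rightarrow> ('p \<Rightarrow> 'p) \<Rightarrow> bool" where
  "is_ladj D A B L R \<longleftrightarrow> (\<forall>x\<in>Pr D A. L x \<in> Pr D B) \<and> (\<forall>y\<in>Pr D B. R y \<in> Pr D A) \<and>
     (\<forall>x\<in>Pr D A. \<forall>y\<in>Pr D B. Le D B (L x) y \<longleftrightarrow> Le D A x (R y))"

definition primary :: "('o,'a,'p) doc \<Rightarrow> bool" where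
  "primary D \<longleftrightarrow> doctrine D \<and>
     (\<forall>A. \<forall>x\<in>Pr D A. \<forall>y\<in>Pr D A. \<exists>m. is_meet D A x y m) \<and>
     (\<forall>f. \<forall>x\<in>Pr D (ccod D f). \<forall>y\<in>Pr D (ccod D f). \<forall>m.
        is_meet D (ccod D f) x y m \<longrightarrow>
        is_meet D (cdom D f) (Re D f x) (Re D f y) (Re D f m))"

text \<open>X x A x A is represented as (X x A) x A; then <pi1,pi2> is pr1 (X x A) A,
  <pi2,pi3> is pair pi2 pi3, and id_X x Delta_A is pair (id_(X x A)) (pr2 X A).\<close>
definition elementary_with :: "('o,'a,'p) doc \<Rightarrow> ('o \<Rightarrow> 'p) \<Rightarrow> bool" where
  "elementary_with D \<delta> \<longleftrightarrow> primary D \<and>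
     (\<forall>A. \<delta> A \<in> Pr D (prd D A A)) \<and>
     (\<forall>X A. let XA = prd D X A; XAA = prd D XA A;
               p2 = comp D (pr2 D X A) (pr1 D XA A); p3 = pr2 D XA A
           in is_ladj D XA XAA
                (\<lambda>\<psi>. meet D XAA (Re D (pr1 D XA A) \<psi>) (Re D (pair D p2 p3) (\<delta> A)))
                (Re D (pair D (cid D XA) (pr2 D X A))))"

definition graph :: "('o,'a,'p) doc \<Rightarrow> ('o \<Rightarrow> 'p) \<Rightarrow> 'a \<Rightarrow> 'p" where
  "graph D \<delta> f = Re D (fprod D f (cid D (ccod D f))) (\<delta> (ccod D f))"

definition is_initial :: "('o,'a,'p) doc \<Rightarrow> 'o \<Rightarrow> bool" where
  "is_initial D Z \<longleftrightarrow> (\<forall>Y. \<exists>!f. hom D f Z Y)"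

definition iso :: "('o,'a,'p) doc \<Rightarrow> 'o \<Rightarrow> 'o \<Rightarrow> bool" where
  "iso D X Y \<longleftrightarrow> (\<exists>f g. hom D f X Y \<and> hom D g Y X \<and>
      comp D g f = cid D X \<and> comp D f g = cid D Y)"

definition stable_initial :: "('o,'a,'p) doc \<Rightarrow> 'o \<Rightarrow> bool" where
  "stable_initial D Z \<longleftrightarrow> is_initial D Z \<and> (\<forall>X. iso D (prd D X Z) Z)"

text \<open>eps1 Gamma A psi : Gamma -> A for psi in P(Gamma x A);
  eps2 A Gamma psi : Gamma -> A for psi in P(A x Gamma) (factors swapped).\<close>
definition AC :: "('o,'a,'p) doc \<Rightarrow> ('o \<Rightarrow> 'o \<Rightarrow> 'p \<Rightarrow> 'a) \<Rightarrow> ('o \<Rightarrow> 'o \<Rightarrow> 'p \<Rightarrow> 'a) \<Rightarrow> bool" where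
  "AC D eps1 eps2 \<longleftrightarrow> (\<forall>A \<Gamma>. \<not> stable_initial D A \<longrightarrow>
      (\<forall>\<psi>\<in>Pr D (prd D \<Gamma> A). hom D (eps1 \<Gamma> A \<psi>) \<Gamma> A) \<and>
      is_ladj D (prd D \<Gamma> A) \<Gamma> (\<lambda>\<psi>. Re D (pair D (cid D \<Gamma>) (eps1 \<Gamma> A \<psi>)) \<psi>)
        (Re D (pr1 D \<Gamma> A)) \<and>
      (\<forall>\<psi>\<in>Pr D (prd D A \<Gamma>). hom D (eps2 A \<Gamma> \<psi>) \<Gamma> A) \<and>
      is_ladj D (prd D A \<Gamma>) \<Gamma> (\<lambda>\<psi>. Re D (pair D (eps2 A \<Gamma> \<psi>) (cid D \<Gamma>)) \<psi>)
        (Re D (pr2 D A \<Gamma>)))"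

text \<open>cc A alpha is the arrow ceil(alpha) : {alpha}^o -> A\<close>
definition co_comprehension :: "('o,'a,'p) doc \<Rightarrow> ('o \<Rightarrow> 'p \<Rightarrow> 'a) \<Rightarrow> bool" where
  "co_comprehension D cc \<longleftrightarrow> (\<forall>A. \<exists>b. is_bot D A b) \<and>
     (\<forall>A. \<forall>\<alpha>\<in>Pr D A. ccod D (cc A \<alpha>) = A \<and>
        Re D (cc A \<alpha>) \<alpha> = bot D (cdom D (cc A \<alpha>)) \<and>
        (\<forall>f. ccod D f = A \<and> Re D f \<alpha> = bot D (cdom D f) \<longrightarrow>
           (\<exists>!g. hom D g (cdom D f) (cdom D (cc A \<alpha>)) \<and> comp D (cc A \<alpha>) g = f)))"

definition full_cc :: "('o,'a,'p) doc \<Rightarrow> ('o \<Rightarrow> 'p \<Rightarrow> 'a) \<Rightarrow> bool" where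
  "full_cc D cc \<longleftrightarrow> (\<forall>A. \<forall>\<alpha>\<in>Pr D A. \<forall>\<beta>\<in>Pr D A.
     (\<exists>h. hom D h (cdom D (cc A \<beta>)) (cdom D (cc A \<alpha>)) \<and> comp D (cc A \<alpha>) h = cc A \<beta>)
     \<longrightarrow> Le D A \<alpha> \<beta>)"

text \<open>The term <eps_{G(ceil alpha)}, id_A>^* G(ceil alpha) in P(A).\<close>
definition exim :: "('o,'a,'p) doc \<Rightarrow> ('o \<Rightarrow> 'p) \<Rightarrow> ('o \<Rightarrow> 'o \<Rightarrow> 'p \<Rightarrow> 'a)
     \<Rightarrow> ('o \<Rightarrow> 'p \<Rightarrow> 'a) \<Rightarrow> 'o \<Rightarrow> 'p \<Rightarrow> 'p" where
  "exim D \<delta> eps2 cc A \<alpha> =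
     (let c = cc A \<alpha>; Oc = cdom D c; \<psi> = graph D \<delta> c
      in Re D (pair D (eps2 Oc A \<psi>) (cid D A)) \<psi>)"

definition eaco_with :: "('o,'a,'p) doc \<Rightarrow> ('o \<Rightarrow> 'p) \<Rightarrow> ('o \<Rightarrow> 'o \<Rightarrow> 'p \<Rightarrow> 'a)
     \<Rightarrow> ('o \<Rightarrow> 'o \<Rightarrow> 'p \<Rightarrow> 'a) \<Rightarrow> ('o \<Rightarrow> 'p \<Rightarrow> 'a) \<Rightarrow> bool" where
  "eaco_with D \<delta> eps1 eps2 cc \<longleftrightarrow>
     elementary_with D \<delta> \<and> co_comprehension D cc \<and> full_cc D cc \<and> AC D eps1 eps2 \<and>
     (\<forall>f. \<forall>\<alpha>\<in>Pr D (ccod D f).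
        \<not> stable_initial D (cdom D (cc (ccod D f) \<alpha>)) \<and>
        \<not> stable_initial D (cdom D (cc (cdom D f) (Re D f \<alpha>))) \<longrightarrow>
        Re D f (exim D \<delta> eps2 cc (ccod D f) \<alpha>) =
        exim D \<delta> eps2 cc (cdom D f) (Re D f \<alpha>))"

definition higher_order :: "('o,'a,'p) doc \<Rightarrow> bool" where
  "higher_order D \<longleftrightarrow> (\<forall>A. \<exists>PA e. e \<in> Pr D (prd D A PA) \<and>
      (\<forall>Y. \<forall>\<phi>\<in>Pr D (prd D A Y). \<exists>\<chi>. hom D \<chi> Y PA \<and> \<phi> = Re D (fprod D (cid D A) \<chi>) e))"

definition heaco :: "('o,'a,'p) doc \<Rightarrow> bool" where
  "heaco D \<longleftrightarrow> (\<exists>\<delta> eps1 eps2 cc. eaco_with D \<delta> eps1 eps2 cc) \<and> higher_order D"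

definition implicational :: "('o,'a,'p) doc \<Rightarrow> bool" where
  "implicational D \<longleftrightarrow> (\<exists>imp :: 'o \<Rightarrow> 'p \<Rightarrow> 'p \<Rightarrow> 'p.
     (\<forall>A. \<forall>x\<in>Pr D A. \<forall>y\<in>Pr D A. imp A x y \<in> Pr D A) \<and>
     (\<forall>f. \<forall>x\<in>Pr D (ccod D f). \<forall>y\<in>Pr D (ccod D f).
        Re D f (imp (ccod D f) x y) = imp (cdom D f) (Re D f x) (Re D f y)) \<and>
     (\<forall>X A. \<exists>\<Pi>. is_ladj D A (prd D X A) (Re D (pr2 D X A)) \<Pi> \<and>
        (\<forall>\<alpha>\<in>Pr D A. \<forall>\<beta>\<in>Pr D (prd D X A).
           \<Pi> (imp (prd D X A) (Re D (pr2 D X A) \<alpha>) \<beta>) = imp A \<alpha> (\<Pi> \<beta>))) \<and>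
     (\<forall>A. \<forall>\<phi>\<in>Pr D A. \<forall>\<psi>\<in>Pr D A. \<forall>\<gamma>\<in>Pr D A.
        Le D A \<phi> (imp A \<psi> \<phi>) \<and>
        Le D A (imp A \<gamma> (imp A \<phi> \<psi>)) (imp A (imp A \<gamma> \<phi>) (imp A \<gamma> \<psi>)) \<and>
        (Le D A \<gamma> (imp A \<phi> \<psi>) \<and> Le D A \<gamma> \<phi> \<longrightarrow> Le D A \<gamma> \<psi>) \<and>
        (Le D A \<phi> \<psi> \<longrightarrow> Le D A \<gamma> (imp A \<phi> \<psi>))))"

definition heyting :: "('o,'a,'p) doc \<Rightarrow> 'o \<Rightarrow> bool" where
  "heyting D A \<longleftrightarrow> (\<exists>t. is_top D A t) \<and> (\<exists>b. is_bot D A b) \<and>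
     (\<forall>x\<in>Pr D A. \<forall>y\<in>Pr D A. (\<exists>m. is_meet D A x y m) \<and> (\<exists>j. is_join D A x y j) \<and>
        (\<exists>z. is_imp D A x y z))"

definition heyting_hom :: "('o,'a,'p) doc \<Rightarrow> 'a \<Rightarrow> bool" where
  "heyting_hom D f \<longleftrightarrow> (let A = ccod D f; B = cdom D f in
     (\<forall>t. is_top D A t \<longrightarrow> is_top D B (Re D f t)) \<and>
     (\<forall>b. is_bot D A b \<longrightarrow> is_bot D B (Re D f b)) \<and>
     (\<forall>x\<in>Pr D A. \<forall>y\<in>Pr D A. \<forall>z.
        (is_meet D A x y z \<longrightarrow> is_meet D B (Re D f x) (Re D f y) (Re D f z)) \<and>
        (is_join D A x y z \<longrightarrow> is_join D B (Re D f x) (Re D f y) (Re D f z)) \<and>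
        (is_imp D A x y z \<longrightarrow> is_imp D B (Re D f x) (Re D f y) (Re D f z))))"

definition projection :: "('o,'a,'p) doc \<Rightarrow> 'a \<Rightarrow> bool" where
  "projection D f \<longleftrightarrow> (\<exists>X Y. f = pr1 D X Y \<or> f = pr2 D X Y)"

text \<open>The square h o g = f o k (g : W -> Y, k : W -> dom f, h : Y -> cod f) is a pullback.\<close>
definition is_pullback :: "('o,'a,'p) doc \<Rightarrow> 'a \<Rightarrow> 'a \<Rightarrow> 'a \<Rightarrow> 'a \<Rightarrow> bool" where
  "is_pullback D h g f k \<longleftrightarrow>
     ccod D h = ccod D f \<and> ccod D g = cdom D h \<and> ccod D k = cdom D f \<and>
     cdom D g = cdom D k \<and> comp D h g = comp D f k \<and>
     (\<forall>u v. cdom D u = cdom D v \<and> ccod D u = cdom D h \<and> ccod D v = cdom D f \<and>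
        comp D h u = comp D f v \<longrightarrow>
        (\<exists>!w. hom D w (cdom D u) (cdom D g) \<and> comp D g w = u \<and> comp D k w = v))"

definition tripos :: "('o,'a,'p) doc \<Rightarrow> bool" where
  "tripos D \<longleftrightarrow> doctrine D \<and>
     (\<forall>A. heyting D A) \<and> (\<forall>f. heyting_hom D f) \<and>
     (\<exists>Sig Pi :: 'a \<Rightarrow> 'p \<Rightarrow> 'p.
        (\<forall>f. projection D f \<longrightarrow>
           is_ladj D (cdom D f) (ccod D f) (Sig f) (Re D f) \<and>
           is_ladj D (ccod D f) (cdom D f) (Re D f) (Pi f)) \<and>
        (\<forall>h g f k. projection D f \<and> projection D g \<and> is_pullback D h g f k \<longrightarrow>
           (\<forall>\<gamma>\<in>Pr D (cdom D f). Re D h (Sig f \<gamma>) = Sig g (Re D k \<gamma>) \<and>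
                                 Re D h (Pi f \<gamma>) = Pi g (Re D k \<gamma>)))) \<and>
     (\<exists>\<delta>. \<forall>X. \<delta> X \<in> Pr D (prd D X X) \<and>
        (\<forall>\<alpha>\<in>Pr D (prd D X X).
           Le D X (top D X) (Re D (pair D (cid D X) (cid D X)) \<alpha>) \<longleftrightarrow> Le D (prd D X X) (\<delta> X) \<alpha>)) \<and>
     higher_order D"

end

theory Submission
  imports Defs
begin

text \<open>Full co-comprehension decides \<open>\<alpha> \<le> \<beta>\<close> by testing on the arrows that send \<open>\<beta>\<close> to \<open>\<bottom>\<close>.
  Along such arrows the implication axioms collapse to computations with \<open>\<bottom>\<close> and \<open>\<top> = \<bottom> \<rightarrow> \<bottom>\<close>,
  which shows that \<open>\<rightarrow>\<close> is the Heyting implication and that \<open>\<not>\<not>\<alpha> = \<alpha>\<close>: every fibre is a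
  Boolean algebra and reindexing preserves the whole structure. Universal quantifiers along
  projections are part of the implicational structure, and existential ones are \<open>\<not>\<Pi>\<not>\<close>. By AC,
  \<open>\<Sigma>\<close> along a projection is reindexing along a section (or the fibre is trivial because the
  other factor is stable initial), which yields Beck--Chevalley for \<open>\<Sigma>\<close> and, by negation, for
  \<open>\<Pi>\<close>; the elementary structure provides the equality predicates. Conversely, the Heyting
  implication of a tripos satisfies the axioms, Frobenius reciprocity coming from the adjunction
  \<open>\<pi>\<^sup>* \<stileturn> \<Pi>\<close>.\<close>

section \<open>Doctrines over categories with finite products\<close>

locale fp_doctrine =
  fixes D :: "('o,'a,'p) doctrine"
  assumes doctrine: "doctrine D"
begin

lemma fp_category: "fp_category D"
  using doctrine by (simp add: doctrine_def)

lemma hom_cid: "hom D (cid D X) X X"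
  using fp_category by (simp add: fp_category_def)

lemma hom_comp: "hom D f X Y \<Longrightarrow> hom D g Y Z \<Longrightarrow> hom D (comp D g f) X Z"
  using fp_category unfolding fp_category_def hom_def by metis

lemma comp_cid_left: "hom D f X Y \<Longrightarrow> comp D (cid D Y) f = f"
  using fp_category unfolding fp_category_def hom_def by metis

lemma comp_cid_right: "hom D f X Y \<Longrightarrow> comp D f (cid D X) = f"
  using fp_category unfolding fp_category_def hom_def by metis

lemma comp_assoc:
  "hom D f X Y \<Longrightarrow> hom D g Y Z \<Longrightarrow> hom D h Z W \<Longrightarrow>
   comp D h (comp D g f) = comp D (comp D h g) f"
  using fp_category unfolding fp_category_def hom_def by metis

lemma hom_pr1: "hom D (pr1 D A B) (prd D A B) A"
  and hom_pr2: "hom D (pr2 D A B) (prd D A B) B"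
  using fp_category by (simp_all add: fp_category_def)

lemma hom_pair: "hom D f X A \<Longrightarrow> hom D g X B \<Longrightarrow> hom D (pair D f g) X (prd D A B)"
  using fp_category unfolding fp_category_def by blast

lemma pr1_pair: "hom D f X A \<Longrightarrow> hom D g X B \<Longrightarrow> comp D (pr1 D A B) (pair D f g) = f"
  and pr2_pair: "hom D f X A \<Longrightarrow> hom D g X B \<Longrightarrow> comp D (pr2 D A B) (pair D f g) = g"
  using fp_category unfolding fp_category_def by blast+

lemma pair_eta:
  "hom D h X (prd D A B) \<Longrightarrow> h = pair D (comp D (pr1 D A B) h) (comp D (pr2 D A B) h)"
  using fp_category unfolding fp_category_def by blast

lemma pair_ext:
  assumes "hom D u X (prd D A B)" "hom D v X (prd D A B)"
    and "comp D (pr1 D A B) u = comp D (pr1 D A B) v" "comp D (pr2 D A B) u = comp D (pr2 D A B) v"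
  shows "u = v"
  using pair_eta[OF assms(1)] pair_eta[OF assms(2)] assms(3,4) by simp

definition swap :: "'o \<Rightarrow> 'o \<Rightarrow> 'a" where
  "swap X A = pair D (pr2 D X A) (pr1 D X A)"

lemma hom_swap: "hom D (swap X A) (prd D X A) (prd D A X)"
  unfolding swap_def by (simp add: hom_pair hom_pr1 hom_pr2)

lemma pr1_swap: "comp D (pr1 D A X) (swap X A) = pr2 D X A"
  and pr2_swap: "comp D (pr2 D A X) (swap X A) = pr1 D X A"
  unfolding swap_def by (rule pr1_pair[OF hom_pr2 hom_pr1], rule pr2_pair[OF hom_pr2 hom_pr1])

lemma swap_swap: "comp D (swap A X) (swap X A) = cid D (prd D X A)"
proof (rule pair_ext[OF hom_comp[OF hom_swap hom_swap] hom_cid])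
  show "comp D (pr1 D X A) (comp D (swap A X) (swap X A)) = comp D (pr1 D X A) (cid D (prd D X A))"
    using comp_assoc[OF hom_swap hom_swap hom_pr1] by (simp add: pr1_swap pr2_swap comp_cid_right[OF hom_pr1])
  show "comp D (pr2 D X A) (comp D (swap A X) (swap X A)) = comp D (pr2 D X A) (cid D (prd D X A))"
    using comp_assoc[OF hom_swap hom_swap hom_pr2] by (simp add: pr1_swap pr2_swap comp_cid_right[OF hom_pr2])
qed

lemma le_refl: "x \<in> Pr D A \<Longrightarrow> Le D A x x"
  using doctrine by (simp add: doctrine_def)

lemma le_antisym: "x \<in> Pr D A \<Longrightarrow> y \<in> Pr D A \<Longrightarrow> Le D A x y \<Longrightarrow> Le D A y x \<Longrightarrow> x = y"
  using doctrine unfolding doctrine_def by blast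

lemma le_trans:
  "x \<in> Pr D A \<Longrightarrow> y \<in> Pr D A \<Longrightarrow> z \<in> Pr D A \<Longrightarrow> Le D A x y \<Longrightarrow> Le D A y z \<Longrightarrow> Le D A x z"
  using doctrine unfolding doctrine_def by blast

lemma eq_iff_same_lower_bounds:
  assumes "a \<in> Pr D A" "b \<in> Pr D A" and "\<And>w. w \<in> Pr D A \<Longrightarrow> Le D A w a \<longleftrightarrow> Le D A w b"
  shows "a = b"
  using assms le_refl le_antisym by blast

lemma Re_closed: "hom D f X A \<Longrightarrow> x \<in> Pr D A \<Longrightarrow> Re D f x \<in> Pr D X"
  using doctrine unfolding doctrine_def hom_def by blast

lemma Re_mono:
  "hom D f X A \<Longrightarrow> x \<in> Pr D A \<Longrightarrow> y \<in> Pr D A \<Longrightarrow> Le D A x y \<Longrightarrow> Le D X (Re D f x) (Re D f y)"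
  using doctrine unfolding doctrine_def hom_def by blast

lemma Re_cid: "x \<in> Pr D A \<Longrightarrow> Re D (cid D A) x = x"
  using doctrine unfolding doctrine_def by blast

lemma Re_comp:
  "hom D f X Y \<Longrightarrow> hom D g Y Z \<Longrightarrow> x \<in> Pr D Z \<Longrightarrow> Re D (comp D g f) x = Re D f (Re D g x)"
  using doctrine unfolding doctrine_def hom_def by metis

lemma Re_section_inverse:
  assumes "hom D f X Y" "hom D s Y X" "comp D f s = cid D Y" "y \<in> Pr D Y"
  shows "Re D s (Re D f y) = y"
  using Re_comp[OF assms(2,1,4)] assms(3) Re_cid[OF assms(4)] by simp

lemma Re_le_iff_split_epi:
  assumes f: "hom D f X Y" and s: "hom D s Y X" and fs: "comp D f s = cid D Y"
    and a: "a \<in> Pr D Y" and b: "b \<in> Pr D Y"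
  shows "Le D X (Re D f a) (Re D f b) \<longleftrightarrow> Le D Y a b"
proof
  assume "Le D X (Re D f a) (Re D f b)"
  then have "Le D Y (Re D s (Re D f a)) (Re D s (Re D f b))"
    using Re_mono[OF s] Re_closed[OF f] a b by blast
  then show "Le D Y a b"
    using Re_section_inverse[OF f s fs] a b by simp
qed (rule Re_mono[OF f a b])

lemma Re_iso_adjoint:
  assumes f: "hom D f X Y" and g: "hom D g Y X"
    and gf: "comp D g f = cid D X" and fg: "comp D f g = cid D Y"
    and u: "u \<in> Pr D Y" and y: "y \<in> Pr D X"
  shows "Le D X (Re D f u) y \<longleftrightarrow> Le D Y u (Re D g y)"
  using Re_le_iff_split_epi[OF f g fg u Re_closed[OF g y]]
    Re_section_inverse[OF g f gf y] by simp

lemma is_bot_unique: "is_bot D A b \<Longrightarrow> is_bot D A b' \<Longrightarrow> b = b'"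
  unfolding is_bot_def using le_antisym by blast

lemma is_top_unique: "is_top D A t \<Longrightarrow> is_top D A t' \<Longrightarrow> t = t'"
  unfolding is_top_def using le_antisym by blast

lemma is_meet_unique: "is_meet D A x y m \<Longrightarrow> is_meet D A x y m' \<Longrightarrow> m = m'"
  unfolding is_meet_def using le_antisym by blast

lemma is_join_unique: "is_join D A x y j \<Longrightarrow> is_join D A x y j' \<Longrightarrow> j = j'"
  unfolding is_join_def using le_antisym by blast

lemma is_imp_unique: "is_imp D A x y z \<Longrightarrow> is_imp D A x y z' \<Longrightarrow> z = z'"
  unfolding is_imp_def by (meson le_antisym le_refl)

lemma bot_eqI: "is_bot D A b \<Longrightarrow> bot D A = b"
  unfolding bot_def by (metis (mono_tags) is_bot_unique someI)

lemma top_eqI: "is_top D A t \<Longrightarrow> top D A = t"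
  unfolding top_def by (metis (mono_tags) is_top_unique someI)

lemma meet_eqI: "is_meet D A x y m \<Longrightarrow> meet D A x y = m"
  unfolding meet_def by (metis (mono_tags) is_meet_unique someI)

lemma is_ladj_unique_left:
  "is_ladj D A B L R \<Longrightarrow> is_ladj D A B L' R \<Longrightarrow> x \<in> Pr D A \<Longrightarrow> L x = L' x"
  unfolding is_ladj_def by (meson le_antisym le_refl)

lemma is_ladj_unique_right:
  "is_ladj D A B L R \<Longrightarrow> is_ladj D A B L R' \<Longrightarrow> y \<in> Pr D B \<Longrightarrow> R y = R' y"
  unfolding is_ladj_def by (meson le_antisym le_refl)

lemma is_pullback_homs:
  assumes "is_pullback D h g f k"
  shows "hom D h (cdom D h) (ccod D f)" "hom D g (cdom D k) (cdom D h)"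
    "hom D f (cdom D f) (ccod D f)" "hom D k (cdom D k) (cdom D f)" "comp D h g = comp D f k"
  using assms unfolding is_pullback_def hom_def by auto

lemma ladj_Beck_Chevalley_le:
  assumes h: "hom D h Z C" and g: "hom D g W Z" and f: "hom D f B C" and k: "hom D k W B"
    and sq: "comp D h g = comp D f k"
    and Lf: "is_ladj D B C Lf (Re D f)" and Lg: "is_ladj D W Z Lg (Re D g)"
    and \<gamma>: "\<gamma> \<in> Pr D B"
  shows "Le D Z (Lg (Re D k \<gamma>)) (Re D h (Lf \<gamma>))"
proof -
  have Lf\<gamma>: "Lf \<gamma> \<in> Pr D C"
    using Lf \<gamma> unfolding is_ladj_def by blast
  have unit: "Le D B \<gamma> (Re D f (Lf \<gamma>))"
    using Lf \<gamma> Lf\<gamma> le_refl unfolding is_ladj_def by blast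
  have "Re D g (Re D h (Lf \<gamma>)) = Re D k (Re D f (Lf \<gamma>))"
    using Re_comp[OF g h Lf\<gamma>] Re_comp[OF k f Lf\<gamma>] sq by simp
  then have "Le D W (Re D k \<gamma>) (Re D g (Re D h (Lf \<gamma>)))"
    using Re_mono[OF k \<gamma> Re_closed[OF f Lf\<gamma>] unit] by simp
  then show ?thesis
    using Lg Re_closed[OF k \<gamma>] Re_closed[OF h Lf\<gamma>] unfolding is_ladj_def by blast
qed

text \<open>If \<open>Lf\<close> is reindexing along a section \<open>s\<close> of \<open>f\<close>, the pullback property yields a
  section \<open>w\<close> of \<open>g\<close> with \<open>k \<circ> w = s \<circ> h\<close>, which gives the converse inequality.\<close>

lemma ladj_Beck_Chevalley_ge_if_section:
  assumes pb: "is_pullback D h g f k"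
    and Lg: "is_ladj D (cdom D k) (cdom D h) Lg (Re D g)"
    and \<gamma>: "\<gamma> \<in> Pr D (cdom D f)"
    and s: "hom D s (ccod D f) (cdom D f)" and fs: "comp D f s = cid D (ccod D f)"
  shows "Le D (cdom D h) (Re D h (Re D s \<gamma>)) (Lg (Re D k \<gamma>))"
proof -
  note sq = is_pullback_homs[OF pb]
  let ?Z = "cdom D h"
  have sh: "hom D (comp D s h) ?Z (cdom D f)"
    using hom_comp sq(1) s by blast
  have "comp D f (comp D s h) = h"
    using comp_assoc[OF sq(1) s sq(3)] fs comp_cid_left sq(1) by simp
  moreover have "comp D h (cid D ?Z) = h"
    using comp_cid_right sq(1) by blast
  ultimately obtain w where w: "hom D w ?Z (cdom D k)" and gw: "comp D g w = cid D ?Z"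
      and kw: "comp D k w = comp D s h"
    using pb hom_cid[of ?Z] sh sq(3) unfolding is_pullback_def hom_def by (metis (no_types, lifting))
  have k\<gamma>: "Re D k \<gamma> \<in> Pr D (cdom D k)"
    using Re_closed sq(4) \<gamma> by blast
  have Lgk\<gamma>: "Lg (Re D k \<gamma>) \<in> Pr D ?Z"
    using Lg k\<gamma> unfolding is_ladj_def by blast
  have unit: "Le D (cdom D k) (Re D k \<gamma>) (Re D g (Lg (Re D k \<gamma>)))"
    using Lg k\<gamma> Lgk\<gamma> le_refl unfolding is_ladj_def by blast
  have "Re D h (Re D s \<gamma>) = Re D w (Re D k \<gamma>)"
    using Re_comp[OF sq(1) s \<gamma>] Re_comp[OF w sq(4) \<gamma>] kw by simp
  moreover have "Re D w (Re D g (Lg (Re D k \<gamma>))) = Lg (Re D k \<gamma>)"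
    using Re_section_inverse[OF sq(2) w gw Lgk\<gamma>] .
  ultimately show ?thesis
    using Re_mono[OF w k\<gamma> _ unit] Re_closed sq(2) Lgk\<gamma> by simp
qed

lemma initial_if_retract_of_initial:
  assumes I: "is_initial D I" and s: "hom D s R I" and r: "hom D r I R"
    and rs: "comp D r s = cid D R"
  shows "is_initial D R"
  unfolding is_initial_def
proof
  fix Z
  obtain e where e: "hom D e I Z"
    using I unfolding is_initial_def by blast
  show "\<exists>!p. hom D p R Z"
  proof (rule ex1I)
    show "hom D (comp D e s) R Z"
      using hom_comp s e by blast
  next
    fix p assume p: "hom D p R Z"
    have "comp D p r = e"
      using I hom_comp[OF r p] e unfolding is_initial_def by blast
    then show "p = comp D e s"
      using comp_assoc[OF s r p] rs comp_cid_right[OF p] by simp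
  qed
qed

lemma initial_if_hom_to_stable_initial:
  assumes si: "stable_initial D Y" and t: "hom D t Q Y"
  shows "is_initial D Q"
proof -
  obtain a b where "hom D a (prd D Q Y) Y" "hom D b Y (prd D Q Y)"
      and "comp D b a = cid D (prd D Q Y)"
    using si unfolding stable_initial_def iso_def by blast
  then have "is_initial D (prd D Q Y)"
    using initial_if_retract_of_initial si unfolding stable_initial_def by blast
  then show ?thesis
    using initial_if_retract_of_initial hom_pair[OF hom_cid t] hom_pr1 pr1_pair[OF hom_cid t] by blast
qed

definition diag :: "'o \<Rightarrow> 'a" where
  "diag A = pair D (cid D A) (cid D A)"

lemma hom_diag: "hom D (diag A) A (prd D A A)"
  unfolding diag_def by (simp add: hom_pair hom_cid)

lemma pr1_diag: "comp D (pr1 D A A) (diag A) = cid D A"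
  and pr2_diag: "comp D (pr2 D A A) (diag A) = cid D A"
  unfolding diag_def using pr1_pair pr2_pair hom_cid by blast+

text \<open>In the notation of \<^const>\<open>elementary_with\<close>: \<open>\<langle>\<pi>\<^sub>2,\<pi>\<^sub>3\<rangle> \<circ> (id\<^sub>X \<times> \<Delta>\<^sub>A) = \<Delta>\<^sub>A \<circ> \<pi>\<^sub>2\<close>,
  and for \<open>X = A\<close> the arrow \<open>\<langle>\<pi>\<^sub>2,\<pi>\<^sub>3\<rangle>\<close> is split by \<open>\<langle>\<langle>\<pi>\<^sub>1,\<pi>\<^sub>1\<rangle>,\<pi>\<^sub>2\<rangle>\<close>.\<close>

lemma pi23_comp_id_times_diag:
  "comp D (pair D (comp D (pr2 D X A) (pr1 D (prd D X A) A)) (pr2 D (prd D X A) A))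
     (pair D (cid D (prd D X A)) (pr2 D X A))
   = comp D (diag A) (pr2 D X A)"
  (is "comp D ?q ?r = _")
proof -
  let ?XA = "prd D X A"
  have q: "hom D ?q (prd D ?XA A) (prd D A A)"
    by (meson hom_comp hom_pair hom_pr1 hom_pr2)
  have r: "hom D ?r ?XA (prd D ?XA A)"
    by (simp add: hom_cid hom_pair hom_pr2)
  have q1: "comp D (pr1 D A A) ?q = comp D (pr2 D X A) (pr1 D ?XA A)"
    and q2: "comp D (pr2 D A A) ?q = pr2 D ?XA A"
    by (meson hom_comp hom_pr1 hom_pr2 pr1_pair pr2_pair)+
  have r1: "comp D (pr1 D ?XA A) ?r = cid D ?XA" and r2: "comp D (pr2 D ?XA A) ?r = pr2 D X A"
    using hom_cid hom_pr2 pr1_pair pr2_pair by blast+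
  show ?thesis
  proof (rule pair_ext[OF hom_comp[OF r q] hom_comp[OF hom_pr2 hom_diag]])
    show "comp D (pr1 D A A) (comp D ?q ?r) = comp D (pr1 D A A) (comp D (diag A) (pr2 D X A))"
      using comp_assoc[OF r q hom_pr1] comp_assoc[OF r hom_pr1 hom_pr2] q1 r1
        comp_assoc[OF hom_pr2 hom_diag hom_pr1] pr1_diag comp_cid_right[OF hom_pr2] comp_cid_left[OF hom_pr2]
      by simp
    show "comp D (pr2 D A A) (comp D ?q ?r) = comp D (pr2 D A A) (comp D (diag A) (pr2 D X A))"
      using comp_assoc[OF r q hom_pr2] q2 r2
        comp_assoc[OF hom_pr2 hom_diag hom_pr2] pr2_diag comp_cid_left[OF hom_pr2]
      by simp
  qed
qed

lemma pi23_split: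
  "comp D (pair D (comp D (pr2 D A A) (pr1 D (prd D A A) A)) (pr2 D (prd D A A) A))
     (pair D (pair D (pr1 D A A) (pr1 D A A)) (pr2 D A A))
   = cid D (prd D A A)"
  (is "comp D ?q ?s = _")
proof -
  let ?AA = "prd D A A"
  have q: "hom D ?q (prd D ?AA A) ?AA"
    by (meson hom_comp hom_pair hom_pr1 hom_pr2)
  have pp: "hom D (pair D (pr1 D A A) (pr1 D A A)) ?AA ?AA"
    by (simp add: hom_pair hom_pr1)
  have s: "hom D ?s ?AA (prd D ?AA A)"
    by (simp add: hom_pair hom_pr1 hom_pr2)
  have q1: "comp D (pr1 D A A) ?q = comp D (pr2 D A A) (pr1 D ?AA A)"
    and q2: "comp D (pr2 D A A) ?q = pr2 D ?AA A"
    by (meson hom_comp hom_pr1 hom_pr2 pr1_pair pr2_pair)+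
  have s1: "comp D (pr1 D ?AA A) ?s = pair D (pr1 D A A) (pr1 D A A)"
    and s2: "comp D (pr2 D ?AA A) ?s = pr2 D A A"
    using pr1_pair[OF pp hom_pr2] pr2_pair[OF pp hom_pr2] by simp_all
  show ?thesis
  proof (rule pair_ext[OF hom_comp[OF s q] hom_cid])
    show "comp D (pr1 D A A) (comp D ?q ?s) = comp D (pr1 D A A) (cid D ?AA)"
      using comp_assoc[OF s q hom_pr1] comp_assoc[OF s hom_pr1 hom_pr2] q1 s1
        pr2_pair[OF hom_pr1 hom_pr1] comp_cid_right[OF hom_pr1] by simp
    show "comp D (pr2 D A A) (comp D ?q ?s) = comp D (pr2 D A A) (cid D ?AA)"
      using comp_assoc[OF s q hom_pr2] q2 s2 comp_cid_right[OF hom_pr2] by simp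
  qed
qed

end

section \<open>Implicational doctrines\<close>

definition implicational_with :: "('o,'a,'p) doc \<Rightarrow> ('o \<Rightarrow> 'p \<Rightarrow> 'p \<Rightarrow> 'p) \<Rightarrow> bool" where
  "implicational_with D imp \<longleftrightarrow>
     (\<forall>A. \<forall>x\<in>Pr D A. \<forall>y\<in>Pr D A. imp A x y \<in> Pr D A) \<and>
     (\<forall>f. \<forall>x\<in>Pr D (ccod D f). \<forall>y\<in>Pr D (ccod D f).
        Re D f (imp (ccod D f) x y) = imp (cdom D f) (Re D f x) (Re D f y)) \<and>
     (\<forall>X A. \<exists>\<Pi>. is_ladj D A (prd D X A) (Re D (pr2 D X A)) \<Pi> \<and>
        (\<forall>\<alpha>\<in>Pr D A. \<forall>\<beta>\<in>Pr D (prd D X A).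
           \<Pi> (imp (prd D X A) (Re D (pr2 D X A) \<alpha>) \<beta>) = imp A \<alpha> (\<Pi> \<beta>))) \<and>
     (\<forall>A. \<forall>\<phi>\<in>Pr D A. \<forall>\<psi>\<in>Pr D A. \<forall>\<gamma>\<in>Pr D A.
        Le D A \<phi> (imp A \<psi> \<phi>) \<and>
        Le D A (imp A \<gamma> (imp A \<phi> \<psi>)) (imp A (imp A \<gamma> \<phi>) (imp A \<gamma> \<psi>)) \<and>
        (Le D A \<gamma> (imp A \<phi> \<psi>) \<and> Le D A \<gamma> \<phi> \<longrightarrow> Le D A \<gamma> \<psi>) \<and>
        (Le D A \<phi> \<psi> \<longrightarrow> Le D A \<gamma> (imp A \<phi> \<psi>)))"

lemma implicational_iff_implicational_with: "implicational D \<longleftrightarrow> (\<exists>imp. implicational_with D imp)"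
  unfolding implicational_def implicational_with_def ..

locale implicational_doctrine = fp_doctrine D for D :: "('o,'a,'p) doctrine" +
  fixes imp :: "'o \<Rightarrow> 'p \<Rightarrow> 'p \<Rightarrow> 'p"
  assumes implicational_with: "implicational_with D imp"
    and has_bot: "\<exists>b. is_bot D A b"
begin

lemma imp_closed: "x \<in> Pr D A \<Longrightarrow> y \<in> Pr D A \<Longrightarrow> imp A x y \<in> Pr D A"
  using implicational_with unfolding implicational_with_def by blast

lemma Re_imp:
  "hom D f X A \<Longrightarrow> x \<in> Pr D A \<Longrightarrow> y \<in> Pr D A \<Longrightarrow> Re D f (imp A x y) = imp X (Re D f x) (Re D f y)"
  using implicational_with unfolding implicational_with_def hom_def by blast

lemma Pi_pr2_Frobenius:
  "\<exists>\<Pi>. is_ladj D A (prd D X A) (Re D (pr2 D X A)) \<Pi> \<and>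
     (\<forall>\<alpha>\<in>Pr D A. \<forall>\<beta>\<in>Pr D (prd D X A).
        \<Pi> (imp (prd D X A) (Re D (pr2 D X A) \<alpha>) \<beta>) = imp A \<alpha> (\<Pi> \<beta>))"
  using implicational_with unfolding implicational_with_def by blast

lemma imp_K: "\<phi> \<in> Pr D A \<Longrightarrow> \<psi> \<in> Pr D A \<Longrightarrow> Le D A \<phi> (imp A \<psi> \<phi>)"
  using implicational_with unfolding implicational_with_def by blast

lemma imp_S:
  "\<phi> \<in> Pr D A \<Longrightarrow> \<psi> \<in> Pr D A \<Longrightarrow> \<gamma> \<in> Pr D A \<Longrightarrow>
   Le D A (imp A \<gamma> (imp A \<phi> \<psi>)) (imp A (imp A \<gamma> \<phi>) (imp A \<gamma> \<psi>))"
  using implicational_with unfolding implicational_with_def by blast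

lemma imp_mp:
  "\<phi> \<in> Pr D A \<Longrightarrow> \<psi> \<in> Pr D A \<Longrightarrow> \<gamma> \<in> Pr D A \<Longrightarrow>
   Le D A \<gamma> (imp A \<phi> \<psi>) \<Longrightarrow> Le D A \<gamma> \<phi> \<Longrightarrow> Le D A \<gamma> \<psi>"
  using implicational_with unfolding implicational_with_def by blast

lemma le_imp_of_le:
  "\<phi> \<in> Pr D A \<Longrightarrow> \<psi> \<in> Pr D A \<Longrightarrow> \<gamma> \<in> Pr D A \<Longrightarrow> Le D A \<phi> \<psi> \<Longrightarrow> Le D A \<gamma> (imp A \<phi> \<psi>)"
  using implicational_with unfolding implicational_with_def by blast

lemma is_bot_bot: "is_bot D A (bot D A)"
  using has_bot bot_eqI by blast

lemma bot_closed [simp]: "bot D A \<in> Pr D A"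
  and bot_le: "x \<in> Pr D A \<Longrightarrow> Le D A (bot D A) x"
  using is_bot_bot by (simp_all add: is_bot_def)

lemma le_bot_imp_eq: "x \<in> Pr D A \<Longrightarrow> Le D A x (bot D A) \<Longrightarrow> x = bot D A"
  by (simp add: bot_le le_antisym)

lemma is_top_imp_bot_bot: "is_top D A (imp A (bot D A) (bot D A))"
  unfolding is_top_def by (simp add: imp_closed le_imp_of_le le_refl)

lemma top_eq_imp_bot_bot: "top D A = imp A (bot D A) (bot D A)"
  using is_top_imp_bot_bot top_eqI by blast

lemma is_top_top: "is_top D A (top D A)"
  using is_top_imp_bot_bot by (simp add: top_eq_imp_bot_bot)

lemma top_closed [simp]: "top D A \<in> Pr D A"
  and le_top: "x \<in> Pr D A \<Longrightarrow> Le D A x (top D A)"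
  using is_top_top by (simp_all add: is_top_def)

lemma imp_eq_top_iff:
  assumes x: "x \<in> Pr D A" and y: "y \<in> Pr D A"
  shows "imp A x y = top D A \<longleftrightarrow> Le D A x y"
proof
  assume "imp A x y = top D A"
  then have "Le D A x (imp A x y)"
    using le_top x by simp
  then show "Le D A x y"
    using imp_mp[OF x y x] le_refl[OF x] by blast
next
  assume "Le D A x y"
  then have "Le D A (top D A) (imp A x y)"
    using le_imp_of_le x y by simp
  then show "imp A x y = top D A"
    using le_antisym[OF imp_closed[OF x y] top_closed] le_top[OF imp_closed[OF x y]] by simp
qed

lemma imp_self: "x \<in> Pr D A \<Longrightarrow> imp A x x = top D A"
  by (simp add: imp_eq_top_iff le_refl)

lemma imp_mono_right:
  assumes x: "x \<in> Pr D A" and y: "y \<in> Pr D A" and p: "p \<in> Pr D A" and "Le D A x y"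
  shows "Le D A (imp A p x) (imp A p y)"
proof -
  have "imp A p (imp A x y) = top D A"
    using assms by (simp add: imp_eq_top_iff imp_closed le_imp_of_le)
  then have "Le D A (top D A) (imp A (imp A p x) (imp A p y))"
    using imp_S[OF x y p] by simp
  then have "imp A (imp A p x) (imp A p y) = top D A"
    using le_antisym[OF imp_closed[OF imp_closed[OF p x] imp_closed[OF p y]] top_closed]
      le_top imp_closed p x y by metis
  then show ?thesis
    using imp_eq_top_iff[OF imp_closed[OF p x] imp_closed[OF p y]] by simp
qed

lemma Re_top: assumes f: "hom D f X A" shows "Re D f (top D A) = top D X"
  using Re_imp[OF f bot_closed bot_closed] imp_self[OF Re_closed[OF f bot_closed]]
  by (simp add: top_eq_imp_bot_bot)

text \<open>The Frobenius condition forces \<open>Re (pr2 X A)\<close> to preserve the bottom: its right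
  adjoint sends \<open>Re (pr2 X A) \<bottom> \<rightarrow> \<bottom>\<close> to \<open>\<bottom> \<rightarrow> \<Pi> \<bottom> = \<top>\<close>.\<close>

lemma Re_pr2_bot: "Re D (pr2 D X A) (bot D A) = bot D (prd D X A)"
proof -
  let ?B = "prd D X A" and ?p = "pr2 D X A"
  obtain \<Pi> where adj: "is_ladj D A ?B (Re D ?p) \<Pi>" and frob: "\<forall>\<alpha>\<in>Pr D A. \<forall>\<beta>\<in>Pr D ?B.
      \<Pi> (imp ?B (Re D ?p \<alpha>) \<beta>) = imp A \<alpha> (\<Pi> \<beta>)"
    using Pi_pr2_Frobenius by blast
  have pb: "Re D ?p (bot D A) \<in> Pr D ?B"
    using Re_closed[OF hom_pr2] by simp
  have "\<Pi> (bot D ?B) \<in> Pr D A"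
    using adj unfolding is_ladj_def by simp
  then have "\<Pi> (imp ?B (Re D ?p (bot D A)) (bot D ?B)) = top D A"
    using frob by (simp add: imp_eq_top_iff bot_le)
  then have "Le D ?B (Re D ?p (top D A)) (imp ?B (Re D ?p (bot D A)) (bot D ?B))"
    using adj pb imp_closed le_refl unfolding is_ladj_def by simp
  then have "Le D ?B (top D ?B) (imp ?B (Re D ?p (bot D A)) (bot D ?B))"
    using Re_top[OF hom_pr2] by simp
  then have "imp ?B (Re D ?p (bot D A)) (bot D ?B) = top D ?B"
    using le_antisym[OF imp_closed[OF pb bot_closed] top_closed le_top[OF imp_closed[OF pb bot_closed]]]
    by simp
  then have "Le D ?B (Re D ?p (bot D A)) (bot D ?B)"
    using imp_eq_top_iff[OF pb bot_closed] by simp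
  then show ?thesis
    using pb le_bot_imp_eq by blast
qed

lemma Re_split_mono_bot:
  assumes f: "hom D f X Y" and g: "hom D g Y X" and gf: "comp D g f = cid D X"
  shows "Re D f (bot D Y) = bot D X"
proof -
  have "Le D X (Re D f (bot D Y)) z" if z: "z \<in> Pr D X" for z
    using Re_mono[OF f bot_closed Re_closed[OF g z] bot_le] Re_section_inverse[OF g f gf z]
      Re_closed[OF g z] by simp
  then have "is_bot D X (Re D f (bot D Y))"
    using Re_closed[OF f bot_closed] unfolding is_bot_def by blast
  then show ?thesis
    using bot_eqI by simp
qed

lemma Re_pr1_bot: "Re D (pr1 D X A) (bot D X) = bot D (prd D X A)"
proof -
  have "Re D (pr1 D X A) (bot D X) = Re D (swap X A) (Re D (pr2 D A X) (bot D X))"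
    using Re_comp[OF hom_swap hom_pr2 bot_closed] pr2_swap by simp
  also have "\<dots> = bot D (prd D X A)"
    by (simp add: Re_pr2_bot Re_split_mono_bot[OF hom_swap hom_swap swap_swap])
  finally show ?thesis .
qed

lemma Re_bot: assumes f: "hom D f X A" shows "Re D f (bot D A) = bot D X"
proof -
  let ?s = "pair D (cid D X) f"
  have s: "hom D ?s X (prd D X A)"
    using f hom_cid hom_pair by blast
  have "Re D f (bot D A) = Re D ?s (Re D (pr2 D X A) (bot D A))"
    using Re_comp[OF s hom_pr2 bot_closed] pr2_pair[OF hom_cid f] by simp
  also have "\<dots> = Re D ?s (Re D (pr1 D X A) (bot D X))"
    by (simp add: Re_pr2_bot Re_pr1_bot)
  also have "\<dots> = bot D X"
    using Re_comp[OF s hom_pr1 bot_closed] pr1_pair[OF hom_cid f] Re_cid[OF bot_closed] by simp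
  finally show ?thesis .
qed

end

section \<open>Implicational doctrines with full co-comprehension\<close>

locale implicational_cc_doctrine = fp_doctrine D for D :: "('o,'a,'p) doctrine" +
  fixes imp :: "'o \<Rightarrow> 'p \<Rightarrow> 'p \<Rightarrow> 'p" and cc :: "'o \<Rightarrow> 'p \<Rightarrow> 'a"
  assumes implicational_with: "implicational_with D imp"
    and primary: "primary D"
    and co_comprehension: "co_comprehension D cc"
    and full_cc: "full_cc D cc"

sublocale implicational_cc_doctrine \<subseteq> implicational_doctrine
  using implicational_with co_comprehension
  by unfold_locales (simp_all add: co_comprehension_def)

context implicational_cc_doctrine
begin

lemma is_meet_meet: "x \<in> Pr D A \<Longrightarrow> y \<in> Pr D A \<Longrightarrow> is_meet D A x y (meet D A x y)"
  using primary meet_eqI unfolding primary_def by metis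

lemma meet_closed: "x \<in> Pr D A \<Longrightarrow> y \<in> Pr D A \<Longrightarrow> meet D A x y \<in> Pr D A"
  using is_meet_meet unfolding is_meet_def by blast

lemma Re_meet:
  assumes f: "hom D f X A" and x: "x \<in> Pr D A" and y: "y \<in> Pr D A"
  shows "Re D f (meet D A x y) = meet D X (Re D f x) (Re D f y)"
  using primary is_meet_meet[OF x y] f x y meet_eqI unfolding primary_def hom_def by metis

lemma meet_top: "y \<in> Pr D A \<Longrightarrow> meet D A y (top D A) = y"
  and top_meet: "y \<in> Pr D A \<Longrightarrow> meet D A (top D A) y = y"
  by (metis is_meet_def le_antisym le_refl le_top is_meet_meet top_closed)+

lemma hom_cc: "\<alpha> \<in> Pr D A \<Longrightarrow> hom D (cc A \<alpha>) (cdom D (cc A \<alpha>)) A"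
  using co_comprehension unfolding co_comprehension_def hom_def by blast

lemma le_by_co_comprehension:
  assumes \<alpha>: "\<alpha> \<in> Pr D A" and \<beta>: "\<beta> \<in> Pr D A"
    and kills: "\<And>Q c. hom D c Q A \<Longrightarrow> Re D c \<beta> = bot D Q \<Longrightarrow> Re D c \<alpha> = bot D Q"
  shows "Le D A \<alpha> \<beta>"
proof -
  let ?c = "cc A \<beta>"
  have "Re D ?c \<beta> = bot D (cdom D ?c)"
    using co_comprehension \<beta> unfolding co_comprehension_def by blast
  then have "Re D ?c \<alpha> = bot D (cdom D ?c)"
    using kills hom_cc[OF \<beta>] by blast
  then have "\<exists>g. hom D g (cdom D ?c) (cdom D (cc A \<alpha>)) \<and> comp D (cc A \<alpha>) g = ?c"
    using co_comprehension \<alpha> hom_cc[OF \<beta>] unfolding co_comprehension_def hom_def by blast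
  then show ?thesis
    using full_cc \<alpha> \<beta> unfolding full_cc_def by blast
qed

lemma imp_top_bot: "imp A (top D A) (bot D A) = bot D A"
  by (meson bot_closed imp_closed le_bot_imp_eq le_refl le_top imp_mp top_closed)

lemma eq_top_if_imp_bot_eq_bot:
  assumes x: "x \<in> Pr D A" and e: "imp A x (bot D A) = bot D A"
  shows "x = top D A"
proof -
  have "Le D A (top D A) x"
  proof (rule le_by_co_comprehension[OF top_closed x])
    fix Q c assume c: "hom D c Q A" and cx: "Re D c x = bot D Q"
    have "Re D c (bot D A) = imp Q (bot D Q) (bot D Q)"
      using e Re_imp[OF c x bot_closed] cx Re_bot[OF c] by simp
    then show "Re D c (top D A) = bot D Q"
      using Re_top[OF c] Re_bot[OF c] top_eq_imp_bot_bot by simp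
  qed
  then show ?thesis
    using le_antisym[OF x top_closed le_top[OF x]] by blast
qed

lemma le_imp_meet:
  assumes \<gamma>: "\<gamma> \<in> Pr D A" and \<phi>: "\<phi> \<in> Pr D A"
  shows "Le D A \<gamma> (imp A \<phi> (meet D A \<gamma> \<phi>))"
proof (rule le_by_co_comprehension[OF \<gamma>])
  show "imp A \<phi> (meet D A \<gamma> \<phi>) \<in> Pr D A"
    using \<gamma> \<phi> imp_closed meet_closed by blast
  fix Q c assume c: "hom D c Q A" and e: "Re D c (imp A \<phi> (meet D A \<gamma> \<phi>)) = bot D Q"
  let ?x = "Re D c \<phi>" and ?y = "Re D c \<gamma>"
  have x: "?x \<in> Pr D Q" and y: "?y \<in> Pr D Q"
    using c \<gamma> \<phi> Re_closed by blast+
  have m: "meet D Q ?y ?x \<in> Pr D Q"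
    using x y meet_closed by blast
  have e': "imp Q ?x (meet D Q ?y ?x) = bot D Q"
    using e Re_imp[OF c \<phi>] Re_meet[OF c \<gamma> \<phi>] meet_closed[OF \<gamma> \<phi>] by simp
  then have "meet D Q ?y ?x = bot D Q"
    using imp_K[OF m x] m le_bot_imp_eq by simp
  moreover have "?x = top D Q"
    using eq_top_if_imp_bot_eq_bot x e' calculation by simp
  ultimately show "?y = bot D Q"
    using meet_top y by simp
qed

lemma is_imp_imp:
  assumes x: "x \<in> Pr D A" and y: "y \<in> Pr D A"
  shows "is_imp D A x y (imp A x y)"
  unfolding is_imp_def
proof (intro conjI ballI iffI allI impI)
  show "imp A x y \<in> Pr D A"
    using x y imp_closed by blast
next
  fix w m assume w: "w \<in> Pr D A" and le: "Le D A w (imp A x y)" and "is_meet D A w x m"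
  then have m: "m \<in> Pr D A" "Le D A m w" "Le D A m x"
    unfolding is_meet_def by auto
  then have "Le D A m (imp A x y)"
    using le_trans w le x y imp_closed by blast
  then show "Le D A m y"
    using imp_mp[OF x y m(1)] m(3) by blast
next
  fix w assume w: "w \<in> Pr D A" and H: "\<forall>m. is_meet D A w x m \<longrightarrow> Le D A m y"
  then have "Le D A (imp A x (meet D A w x)) (imp A x y)"
    using imp_mono_right meet_closed is_meet_meet x y by blast
  then show "Le D A w (imp A x y)"
    using le_imp_meet[OF w x] le_trans w x y imp_closed meet_closed by meson
qed

definition neg :: "'o \<Rightarrow> 'p \<Rightarrow> 'p" where
  "neg A x = imp A x (bot D A)"

definition disj :: "'o \<Rightarrow> 'p \<Rightarrow> 'p \<Rightarrow> 'p" where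
  "disj A x y = imp A (neg A x) y"

lemma neg_closed: "x \<in> Pr D A \<Longrightarrow> neg A x \<in> Pr D A"
  by (simp add: neg_def imp_closed)

lemma disj_closed: "x \<in> Pr D A \<Longrightarrow> y \<in> Pr D A \<Longrightarrow> disj A x y \<in> Pr D A"
  by (simp add: disj_def imp_closed neg_closed)

lemma Re_neg: "hom D f X A \<Longrightarrow> x \<in> Pr D A \<Longrightarrow> Re D f (neg A x) = neg X (Re D f x)"
  unfolding neg_def using Re_imp Re_bot bot_closed by metis

lemma Re_disj:
  "hom D f X A \<Longrightarrow> x \<in> Pr D A \<Longrightarrow> y \<in> Pr D A \<Longrightarrow> Re D f (disj A x y) = disj X (Re D f x) (Re D f y)"
  unfolding disj_def using Re_imp Re_neg neg_closed by metis

lemma le_neg_iff_meet_le_bot: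
  assumes "w \<in> Pr D A" "x \<in> Pr D A"
  shows "Le D A w (neg A x) \<longleftrightarrow> (\<forall>m. is_meet D A w x m \<longrightarrow> Le D A m (bot D A))"
  using is_imp_imp[OF assms(2) bot_closed] assms(1) unfolding is_imp_def neg_def by blast

lemma le_neg_neg: assumes x: "x \<in> Pr D A" shows "Le D A x (neg A (neg A x))"
  using le_neg_iff_meet_le_bot[OF x neg_closed[OF x]] imp_mp[OF x bot_closed]
  unfolding is_meet_def neg_def by blast

text \<open>The fibres are Boolean: an arrow killing \<open>x\<close> sends \<open>\<not>\<not>x\<close> to \<open>(\<bottom> \<rightarrow> \<bottom>) \<rightarrow> \<bottom> = \<bottom>\<close>.\<close>

lemma neg_neg_le: assumes x: "x \<in> Pr D A" shows "Le D A (neg A (neg A x)) x"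
proof (rule le_by_co_comprehension[OF neg_closed[OF neg_closed[OF x]] x])
  fix Q c assume c: "hom D c Q A" and cx: "Re D c x = bot D Q"
  then show "Re D c (neg A (neg A x)) = bot D Q"
    using Re_neg[OF c] neg_closed x imp_top_bot top_eq_imp_bot_bot by (simp add: neg_def)
qed

lemma neg_neg: "x \<in> Pr D A \<Longrightarrow> neg A (neg A x) = x"
  using le_antisym neg_closed le_neg_neg neg_neg_le by blast

lemma neg_antimono:
  assumes a: "a \<in> Pr D A" and b: "b \<in> Pr D A" and "Le D A b a"
  shows "Le D A (neg A a) (neg A b)"
  using le_neg_iff_meet_le_bot[OF neg_closed[OF a] b] assms le_trans imp_mp[OF a bot_closed]
  unfolding is_meet_def neg_def by meson

lemma neg_le_neg_iff: "a \<in> Pr D A \<Longrightarrow> b \<in> Pr D A \<Longrightarrow> Le D A (neg A a) (neg A b) \<longleftrightarrow> Le D A b a"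
  by (metis neg_antimono neg_closed neg_neg)

lemma le_neg_iff: "a \<in> Pr D A \<Longrightarrow> b \<in> Pr D A \<Longrightarrow> Le D A a (neg A b) \<longleftrightarrow> Le D A b (neg A a)"
  by (metis neg_antimono neg_closed neg_neg)

lemma neg_le_iff: "a \<in> Pr D A \<Longrightarrow> b \<in> Pr D A \<Longrightarrow> Le D A (neg A a) b \<longleftrightarrow> Le D A (neg A b) a"
  by (metis neg_antimono neg_closed neg_neg)

lemma is_join_disj:
  assumes x: "x \<in> Pr D A" and y: "y \<in> Pr D A"
  shows "is_join D A x y (disj A x y)"
  unfolding is_join_def
proof (intro conjI ballI impI)
  show "disj A x y \<in> Pr D A"
    using disj_closed x y by blast
  show "Le D A y (disj A x y)"
    unfolding disj_def using imp_K neg_closed x y by blast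
  show "Le D A x (disj A x y)"
    unfolding disj_def
    using le_trans[OF x _ _ le_neg_neg[OF x]] imp_mono_right[OF bot_closed y neg_closed[OF x] bot_le[OF y]]
      neg_closed x y imp_closed by (simp add: neg_def)
next
  fix z assume z: "z \<in> Pr D A" and le: "Le D A x z \<and> Le D A y z"
  show "Le D A (disj A x y) z"
  proof (rule le_by_co_comprehension[OF disj_closed[OF x y] z])
    fix Q c assume c: "hom D c Q A" and cz: "Re D c z = bot D Q"
    have "Re D c x = bot D Q" "Re D c y = bot D Q"
      using Re_mono[OF c _ z] le cz le_bot_imp_eq Re_closed[OF c] x y by metis+
    then show "Re D c (disj A x y) = bot D Q"
      using Re_disj[OF c x y] imp_top_bot top_eq_imp_bot_bot by (simp add: disj_def neg_def)
  qed
qed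

lemma heyting: "heyting D A"
  unfolding heyting_def using is_top_imp_bot_bot is_bot_bot is_meet_meet is_join_disj is_imp_imp by blast

lemma heyting_hom: "heyting_hom D f"
proof -
  let ?A = "ccod D f" and ?B = "cdom D f"
  have f: "hom D f ?B ?A"
    by (simp add: hom_def)
  show ?thesis
    unfolding heyting_hom_def Let_def
  proof (intro conjI allI impI ballI)
    fix t assume "is_top D ?A t"
    then show "is_top D ?B (Re D f t)"
      using Re_top[OF f] is_top_top top_eqI by metis
  next
    fix b assume "is_bot D ?A b"
    then show "is_bot D ?B (Re D f b)"
      using Re_bot[OF f] is_bot_bot bot_eqI by metis
  next
    fix x y z assume x: "x \<in> Pr D ?A" and y: "y \<in> Pr D ?A"
    have Rx: "Re D f x \<in> Pr D ?B" and Ry: "Re D f y \<in> Pr D ?B"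
      using Re_closed[OF f] x y by blast+
    show "is_meet D ?A x y z \<Longrightarrow> is_meet D ?B (Re D f x) (Re D f y) (Re D f z)"
      using Re_meet[OF f x y] is_meet_meet[OF Rx Ry] meet_eqI by metis
    show "is_join D ?A x y z \<Longrightarrow> is_join D ?B (Re D f x) (Re D f y) (Re D f z)"
      using Re_disj[OF f x y] is_join_disj[OF Rx Ry] is_join_disj[OF x y] is_join_unique by metis
    show "is_imp D ?A x y z \<Longrightarrow> is_imp D ?B (Re D f x) (Re D f y) (Re D f z)"
      using Re_imp[OF f x y] is_imp_imp[OF Rx Ry] is_imp_imp[OF x y] is_imp_unique by metis
  qed
qed

text \<open>Negation, being an order-reversing involution commuting with reindexing, turns
  right adjoints of reindexing into left adjoints and vice versa.\<close>

lemma ladj_neg_radj_neg: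
  assumes f: "hom D f B A" and adj: "is_ladj D A B (Re D f) R"
  shows "is_ladj D B A (\<lambda>\<psi>. neg A (R (neg B \<psi>))) (Re D f)"
  unfolding is_ladj_def
proof (intro conjI ballI)
  have R: "\<And>y. y \<in> Pr D B \<Longrightarrow> R y \<in> Pr D A"
    using adj unfolding is_ladj_def by blast
  fix x assume x: "x \<in> Pr D B"
  then show "neg A (R (neg B x)) \<in> Pr D A"
    using R neg_closed by blast
  fix y assume y: "y \<in> Pr D A"
  have "Le D A (neg A (R (neg B x))) y \<longleftrightarrow> Le D A (neg A y) (R (neg B x))"
    using neg_le_iff R neg_closed x y by blast
  also have "\<dots> \<longleftrightarrow> Le D B (Re D f (neg A y)) (neg B x)"
    using adj neg_closed x y unfolding is_ladj_def by blast
  also have "\<dots> \<longleftrightarrow> Le D B (neg B (Re D f y)) (neg B x)"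
    using Re_neg[OF f y] by simp
  also have "\<dots> \<longleftrightarrow> Le D B x (Re D f y)"
    using neg_le_neg_iff Re_closed[OF f y] x by blast
  finally show "Le D A (neg A (R (neg B x))) y = Le D B x (Re D f y)" .
next
  fix y assume "y \<in> Pr D A"
  then show "Re D f y \<in> Pr D B"
    using f Re_closed by blast
qed

lemma radj_neg_ladj_neg:
  assumes f: "hom D f B A" and adj: "is_ladj D B A L (Re D f)"
  shows "is_ladj D A B (Re D f) (\<lambda>\<gamma>. neg A (L (neg B \<gamma>)))"
  unfolding is_ladj_def
proof (intro conjI ballI)
  have L: "\<And>y. y \<in> Pr D B \<Longrightarrow> L y \<in> Pr D A"
    using adj unfolding is_ladj_def by blast
  fix y assume y: "y \<in> Pr D B"
  then show "neg A (L (neg B y)) \<in> Pr D A"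
    using L neg_closed by blast
  fix x assume x: "x \<in> Pr D A"
  have "Le D A x (neg A (L (neg B y))) \<longleftrightarrow> Le D A (L (neg B y)) (neg A x)"
    using le_neg_iff L neg_closed x y by blast
  also have "\<dots> \<longleftrightarrow> Le D B (neg B y) (Re D f (neg A x))"
    using adj neg_closed x y unfolding is_ladj_def by blast
  also have "\<dots> \<longleftrightarrow> Le D B (neg B y) (neg B (Re D f x))"
    using Re_neg[OF f x] by simp
  also have "\<dots> \<longleftrightarrow> Le D B (Re D f x) y"
    using neg_le_neg_iff Re_closed[OF f x] y by blast
  finally show "Le D B (Re D f x) y = Le D A x (neg A (L (neg B y)))" by simp
next
  fix x assume "x \<in> Pr D A"
  then show "Re D f x \<in> Pr D B"
    using f Re_closed by blast
qed

lemma exists_Pi_pr1: "\<exists>R. is_ladj D X (prd D X A) (Re D (pr1 D X A)) R"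
proof -
  obtain R where adj: "is_ladj D X (prd D A X) (Re D (pr2 D A X)) R"
    using Pi_pr2_Frobenius by blast
  have "is_ladj D X (prd D X A) (Re D (pr1 D X A)) (\<lambda>y. R (Re D (swap A X) y))"
    unfolding is_ladj_def
  proof (intro conjI ballI)
    fix x assume x: "x \<in> Pr D X"
    then show "Re D (pr1 D X A) x \<in> Pr D (prd D X A)"
      using Re_closed hom_pr1 by blast
    have px: "Re D (pr1 D X A) x = Re D (swap X A) (Re D (pr2 D A X) x)"
      using Re_comp[OF hom_swap hom_pr2 x] pr2_swap by simp
    fix y assume y: "y \<in> Pr D (prd D X A)"
    have "Le D (prd D X A) (Re D (pr1 D X A) x) y \<longleftrightarrow>
        Le D (prd D A X) (Re D (pr2 D A X) x) (Re D (swap A X) y)"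
      using px Re_iso_adjoint[OF hom_swap hom_swap swap_swap swap_swap Re_closed[OF hom_pr2 x] y] by simp
    also have "\<dots> \<longleftrightarrow> Le D X x (R (Re D (swap A X) y))"
      using adj x Re_closed[OF hom_swap y] unfolding is_ladj_def by blast
    finally show "Le D (prd D X A) (Re D (pr1 D X A) x) y = Le D X x (R (Re D (swap A X) y))" .
  next
    fix y assume "y \<in> Pr D (prd D X A)"
    then show "R (Re D (swap A X) y) \<in> Pr D X"
      using adj Re_closed hom_swap unfolding is_ladj_def by blast
  qed
  then show ?thesis by blast
qed

lemma exists_Pi_projection: "projection D f \<Longrightarrow> \<exists>R. is_ladj D (ccod D f) (cdom D f) (Re D f) R"
  unfolding projection_def using exists_Pi_pr1 Pi_pr2_Frobenius hom_pr1 hom_pr2 unfolding hom_def by metis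

lemma exists_Sigma_projection: "projection D f \<Longrightarrow> \<exists>L. is_ladj D (cdom D f) (ccod D f) L (Re D f)"
  using exists_Pi_projection ladj_neg_radj_neg by (metis hom_def)

definition Sig :: "'a \<Rightarrow> 'p \<Rightarrow> 'p" where
  "Sig f = (SOME L. is_ladj D (cdom D f) (ccod D f) L (Re D f))"

definition Pi :: "'a \<Rightarrow> 'p \<Rightarrow> 'p" where
  "Pi f = (SOME R. is_ladj D (ccod D f) (cdom D f) (Re D f) R)"

lemma is_ladj_Sig: "projection D f \<Longrightarrow> is_ladj D (cdom D f) (ccod D f) (Sig f) (Re D f)"
  unfolding Sig_def using exists_Sigma_projection someI_ex by metis

lemma is_ladj_Pi: "projection D f \<Longrightarrow> is_ladj D (ccod D f) (cdom D f) (Re D f) (Pi f)"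
  unfolding Pi_def using exists_Pi_projection someI_ex by metis

lemma Pi_eq_neg_Sig_neg:
  "projection D f \<Longrightarrow> \<gamma> \<in> Pr D (cdom D f) \<Longrightarrow> Pi f \<gamma> = neg (ccod D f) (Sig f (neg (cdom D f) \<gamma>))"
  using is_ladj_unique_right[OF is_ladj_Pi radj_neg_ladj_neg[OF _ is_ladj_Sig]] by (metis hom_def)

lemma Sig_bot:
  assumes f: "projection D f"
  shows "Sig f (bot D (cdom D f)) = bot D (ccod D f)"
proof -
  have "is_bot D (ccod D f) (Sig f (bot D (cdom D f)))"
    using is_ladj_Sig[OF f] bot_le Re_closed[of f "cdom D f" "ccod D f"]
    unfolding is_ladj_def is_bot_def hom_def by simp
  then show ?thesis
    using bot_eqI by simp
qed

text \<open>All co-comprehension arrows into such an object have initial domain.\<close>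

lemma le_if_hom_to_stable_initial:
  assumes si: "stable_initial D Y" and t: "hom D t T Y" and \<alpha>: "\<alpha> \<in> Pr D T" and \<beta>: "\<beta> \<in> Pr D T"
  shows "Le D T \<alpha> \<beta>"
proof -
  let ?O\<alpha> = "cdom D (cc T \<alpha>)" and ?O\<beta> = "cdom D (cc T \<beta>)"
  have "is_initial D ?O\<beta>"
    using initial_if_hom_to_stable_initial[OF si hom_comp[OF hom_cc[OF \<beta>] t]] .
  then obtain h where h: "hom D h ?O\<beta> ?O\<alpha>" and "comp D (cc T \<alpha>) h = cc T \<beta>"
    using hom_comp[OF _ hom_cc[OF \<alpha>]] hom_cc[OF \<beta>] unfolding is_initial_def by metis
  then show ?thesis
    using full_cc \<alpha> \<beta> unfolding full_cc_def by blast
qed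

end

section \<open>Quantifiers and equality in an implicational heaco\<close>

locale implicational_heaco = implicational_cc_doctrine D imp cc
  for D :: "('o,'a,'p) doctrine" and imp cc +
  fixes \<delta> :: "'o \<Rightarrow> 'p" and eps1 eps2 :: "'o \<Rightarrow> 'o \<Rightarrow> 'p \<Rightarrow> 'a"
  assumes elementary: "elementary_with D \<delta>"
    and AC: "AC D eps1 eps2"
begin

lemma Sig_pr1_eq_Re_section:
  assumes Y: "\<not> stable_initial D Y" and \<gamma>: "\<gamma> \<in> Pr D (prd D X Y)"
  shows "hom D (eps1 X Y \<gamma>) X Y" and "Sig (pr1 D X Y) \<gamma> = Re D (pair D (cid D X) (eps1 X Y \<gamma>)) \<gamma>"
proof -
  have adj: "is_ladj D (prd D X Y) X (\<lambda>\<psi>. Re D (pair D (cid D X) (eps1 X Y \<psi>)) \<psi>) (Re D (pr1 D X Y))"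
    using AC Y unfolding AC_def by blast
  show "hom D (eps1 X Y \<gamma>) X Y"
    using AC Y \<gamma> unfolding AC_def by blast
  show "Sig (pr1 D X Y) \<gamma> = Re D (pair D (cid D X) (eps1 X Y \<gamma>)) \<gamma>"
  proof -
    have "is_ladj D (prd D X Y) X (Sig (pr1 D X Y)) (Re D (pr1 D X Y))"
      using is_ladj_Sig[of "pr1 D X Y"] hom_pr1[of X Y] unfolding projection_def hom_def by auto
    then show ?thesis
      using is_ladj_unique_left[OF _ adj \<gamma>] by simp
  qed
qed

lemma Sig_pr2_eq_Re_section:
  assumes X: "\<not> stable_initial D X" and \<gamma>: "\<gamma> \<in> Pr D (prd D X Y)"
  shows "hom D (eps2 X Y \<gamma>) Y X" and "Sig (pr2 D X Y) \<gamma> = Re D (pair D (eps2 X Y \<gamma>) (cid D Y)) \<gamma>"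
proof -
  have adj: "is_ladj D (prd D X Y) Y (\<lambda>\<psi>. Re D (pair D (eps2 X Y \<psi>) (cid D Y)) \<psi>) (Re D (pr2 D X Y))"
    using AC X unfolding AC_def by blast
  show "hom D (eps2 X Y \<gamma>) Y X"
    using AC X \<gamma> unfolding AC_def by blast
  show "Sig (pr2 D X Y) \<gamma> = Re D (pair D (eps2 X Y \<gamma>) (cid D Y)) \<gamma>"
  proof -
    have "is_ladj D (prd D X Y) Y (Sig (pr2 D X Y)) (Re D (pr2 D X Y))"
      using is_ladj_Sig[of "pr2 D X Y"] hom_pr2[of X Y] unfolding projection_def hom_def by auto
    then show ?thesis
      using is_ladj_unique_left[OF _ adj \<gamma>] by simp
  qed
qed

text \<open>If the other factor is stable initial, AC gives no section, but then the fibre is trivial.\<close>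

lemma Sig_eq_Re_section_or_trivial:
  assumes f: "projection D f" and \<gamma>: "\<gamma> \<in> Pr D (cdom D f)"
  shows "(\<exists>s. hom D s (ccod D f) (cdom D f) \<and> comp D f s = cid D (ccod D f) \<and> Sig f \<gamma> = Re D s \<gamma>)
    \<or> (\<forall>a\<in>Pr D (cdom D f). \<forall>b\<in>Pr D (cdom D f). Le D (cdom D f) a b)"
proof -
  obtain X Y where "f = pr1 D X Y \<or> f = pr2 D X Y"
    using f unfolding projection_def by blast
  then show ?thesis
  proof
    assume f1: "f = pr1 D X Y"
    then have dom: "cdom D f = prd D X Y" "ccod D f = X"
      using hom_pr1[of X Y] unfolding hom_def by auto
    show ?thesis
    proof (cases "stable_initial D Y")
      case False
      note e = Sig_pr1_eq_Re_section[OF False, of \<gamma> X]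
      then show ?thesis
        using hom_pair[OF hom_cid e(1)] pr1_pair[OF hom_cid e(1)] \<gamma> dom f1 by auto
    qed (use le_if_hom_to_stable_initial[OF _ hom_pr2] dom in simp)
  next
    assume f2: "f = pr2 D X Y"
    then have dom: "cdom D f = prd D X Y" "ccod D f = Y"
      using hom_pr2[of X Y] unfolding hom_def by auto
    show ?thesis
    proof (cases "stable_initial D X")
      case False
      note e = Sig_pr2_eq_Re_section[OF False, of \<gamma> Y]
      then show ?thesis
        using hom_pair[OF e(1) hom_cid] pr2_pair[OF e(1) hom_cid] \<gamma> dom f2 by auto
    qed (use le_if_hom_to_stable_initial[OF _ hom_pr1] dom in simp)
  qed
qed

lemma Sig_Beck_Chevalley:
  assumes g: "projection D g" and f: "projection D f" and pb: "is_pullback D h g f k"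
    and \<gamma>: "\<gamma> \<in> Pr D (cdom D f)"
  shows "Re D h (Sig f \<gamma>) = Sig g (Re D k \<gamma>)"
proof -
  note sq = is_pullback_homs[OF pb]
  have Lg: "is_ladj D (cdom D k) (cdom D h) (Sig g) (Re D g)"
    using is_ladj_Sig[OF g] sq(2) unfolding hom_def by auto
  have Lgk\<gamma>: "Sig g (Re D k \<gamma>) \<in> Pr D (cdom D h)"
    using Lg Re_closed[OF sq(4) \<gamma>] unfolding is_ladj_def by blast
  have hSf\<gamma>: "Re D h (Sig f \<gamma>) \<in> Pr D (cdom D h)"
    using Re_closed[OF sq(1)] is_ladj_Sig[OF f] \<gamma> unfolding is_ladj_def by blast
  have "Le D (cdom D h) (Re D h (Sig f \<gamma>)) (Sig g (Re D k \<gamma>))"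
    using Sig_eq_Re_section_or_trivial[OF f \<gamma>]
  proof
    assume "\<exists>s. hom D s (ccod D f) (cdom D f) \<and> comp D f s = cid D (ccod D f) \<and> Sig f \<gamma> = Re D s \<gamma>"
    then obtain s where s: "hom D s (ccod D f) (cdom D f)" and fs: "comp D f s = cid D (ccod D f)"
      and "Sig f \<gamma> = Re D s \<gamma>"
      by blast
    then show ?thesis
      using ladj_Beck_Chevalley_ge_if_section[OF pb Lg \<gamma> s fs] by simp
  next
    assume "\<forall>a\<in>Pr D (cdom D f). \<forall>b\<in>Pr D (cdom D f). Le D (cdom D f) a b"
    then have "\<gamma> = bot D (cdom D f)"
      using \<gamma> le_bot_imp_eq by simp
    then show ?thesis
      using Sig_bot[OF f] Re_bot[OF sq(1)] bot_le[OF Lgk\<gamma>] by simp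
  qed
  moreover have "Le D (cdom D h) (Sig g (Re D k \<gamma>)) (Re D h (Sig f \<gamma>))"
    using ladj_Beck_Chevalley_le[OF sq is_ladj_Sig[OF f] Lg \<gamma>] .
  ultimately show ?thesis
    using le_antisym[OF hSf\<gamma> Lgk\<gamma>] by blast
qed

lemma Pi_Beck_Chevalley:
  assumes g: "projection D g" and f: "projection D f" and pb: "is_pullback D h g f k"
    and \<gamma>: "\<gamma> \<in> Pr D (cdom D f)"
  shows "Re D h (Pi f \<gamma>) = Pi g (Re D k \<gamma>)"
proof -
  note sq = is_pullback_homs[OF pb]
  have dom: "cdom D g = cdom D k" "ccod D g = cdom D h"
    using sq(2) unfolding hom_def by auto
  have n\<gamma>: "neg (cdom D f) \<gamma> \<in> Pr D (cdom D f)"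
    using neg_closed \<gamma> by blast
  have "Re D h (Pi f \<gamma>) = neg (cdom D h) (Re D h (Sig f (neg (cdom D f) \<gamma>)))"
    using Pi_eq_neg_Sig_neg[OF f \<gamma>] Re_neg[OF sq(1)] is_ladj_Sig[OF f] n\<gamma>
    unfolding is_ladj_def by simp
  also have "\<dots> = neg (cdom D h) (Sig g (neg (cdom D k) (Re D k \<gamma>)))"
    using Sig_Beck_Chevalley[OF g f pb n\<gamma>] Re_neg[OF sq(4) \<gamma>] by simp
  also have "\<dots> = Pi g (Re D k \<gamma>)"
    using Pi_eq_neg_Sig_neg[OF g] Re_closed[OF sq(4) \<gamma>] dom by simp
  finally show ?thesis .
qed

text \<open>The equality \<open>\<delta>\<^sub>A\<close> of the elementary structure satisfies the tripos condition: reading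
  the left adjoint for \<open>X = A\<close> at \<open>\<top>\<close> gives \<open>\<delta>\<^sub>A \<le> \<alpha>\<close> iff \<open>\<top> \<le> \<pi>\<^sub>2\<^sup>*\<Delta>\<^sup>*\<alpha>\<close>, because
  \<open>\<langle>\<pi>\<^sub>2,\<pi>\<^sub>3\<rangle>\<close> and \<open>\<pi>\<^sub>2\<close> are split epimorphisms.\<close>

lemma top_le_Re_diag_iff:
  assumes \<alpha>: "\<alpha> \<in> Pr D (prd D A A)"
  shows "Le D A (top D A) (Re D (diag A) \<alpha>) \<longleftrightarrow> Le D (prd D A A) (\<delta> A) \<alpha>"
proof -
  let ?AA = "prd D A A" and ?AAA = "prd D (prd D A A) A"
  let ?q = "pair D (comp D (pr2 D A A) (pr1 D ?AA A)) (pr2 D ?AA A)"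
  let ?r = "pair D (cid D ?AA) (pr2 D A A)"
  let ?s = "pair D (pair D (pr1 D A A) (pr1 D A A)) (pr2 D A A)"
  have \<delta>: "\<delta> A \<in> Pr D ?AA"
    using elementary unfolding elementary_with_def by blast
  have adj: "is_ladj D ?AA ?AAA (\<lambda>\<psi>. meet D ?AAA (Re D (pr1 D ?AA A) \<psi>) (Re D ?q (\<delta> A))) (Re D ?r)"
    using elementary unfolding elementary_with_def Let_def by blast
  have q: "hom D ?q ?AAA ?AA"
    using hom_pair[OF hom_comp[OF hom_pr1 hom_pr2] hom_pr2] .
  have r: "hom D ?r ?AA ?AAA"
    using hom_pair[OF hom_cid hom_pr2] .
  have s: "hom D ?s ?AA ?AAA"
    using hom_pair[OF hom_pair[OF hom_pr1 hom_pr1] hom_pr2] .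
  have q\<delta>: "Re D ?q (\<delta> A) \<in> Pr D ?AAA" and q\<alpha>: "Re D ?q \<alpha> \<in> Pr D ?AAA"
    and d\<alpha>: "Re D (diag A) \<alpha> \<in> Pr D A"
    using Re_closed q \<delta> \<alpha> hom_diag by blast+
  have "Le D ?AA (\<delta> A) \<alpha> \<longleftrightarrow> Le D ?AAA (Re D ?q (\<delta> A)) (Re D ?q \<alpha>)"
    using Re_le_iff_split_epi[OF q s pi23_split \<delta> \<alpha>] by simp
  also have "\<dots> \<longleftrightarrow> Le D ?AAA (meet D ?AAA (Re D (pr1 D ?AA A) (top D ?AA)) (Re D ?q (\<delta> A))) (Re D ?q \<alpha>)"
    using Re_top[OF hom_pr1] top_meet[OF q\<delta>] by simp
  also have "\<dots> \<longleftrightarrow> Le D ?AA (top D ?AA) (Re D ?r (Re D ?q \<alpha>))"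
    using adj q\<alpha> unfolding is_ladj_def by simp
  also have "Re D ?r (Re D ?q \<alpha>) = Re D (pr2 D A A) (Re D (diag A) \<alpha>)"
    using Re_comp[OF r q \<alpha>] Re_comp[OF hom_pr2 hom_diag \<alpha>] pi23_comp_id_times_diag by simp
  also have "Le D ?AA (top D ?AA) (Re D (pr2 D A A) (Re D (diag A) \<alpha>)) \<longleftrightarrow> Le D A (top D A) (Re D (diag A) \<alpha>)"
    using Re_le_iff_split_epi[OF hom_pr2 hom_diag pr2_diag top_closed d\<alpha>] Re_top[OF hom_pr2] by simp
  finally show ?thesis ..
qed

lemma tripos: "higher_order D \<Longrightarrow> tripos D"
  unfolding tripos_def
proof (intro conjI)
  show "\<exists>Sig Pi. (\<forall>f. projection D f \<longrightarrow>
           is_ladj D (cdom D f) (ccod D f) (Sig f) (Re D f) \<and>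
           is_ladj D (ccod D f) (cdom D f) (Re D f) (Pi f)) \<and>
        (\<forall>h g f k. projection D f \<and> projection D g \<and> is_pullback D h g f k \<longrightarrow>
           (\<forall>\<gamma>\<in>Pr D (cdom D f). Re D h (Sig f \<gamma>) = Sig g (Re D k \<gamma>) \<and>
                                 Re D h (Pi f \<gamma>) = Pi g (Re D k \<gamma>)))"
    using is_ladj_Sig is_ladj_Pi Sig_Beck_Chevalley Pi_Beck_Chevalley by blast
  show "\<exists>\<delta>. \<forall>X. \<delta> X \<in> Pr D (prd D X X) \<and> (\<forall>\<alpha>\<in>Pr D (prd D X X).
        Le D X (top D X) (Re D (pair D (cid D X) (cid D X)) \<alpha>) = Le D (prd D X X) (\<delta> X) \<alpha>)"
    using elementary top_le_Re_diag_iff unfolding elementary_with_def diag_def by blast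
qed (use doctrine heyting heyting_hom in auto)

end

section \<open>Triposes are implicational\<close>

locale tripos_doctrine = fp_doctrine D for D :: "('o,'a,'p) doctrine" +
  assumes tripos: "tripos D"
begin

lemma is_meet_meet: "x \<in> Pr D A \<Longrightarrow> y \<in> Pr D A \<Longrightarrow> is_meet D A x y (meet D A x y)"
  using tripos meet_eqI unfolding tripos_def heyting_def by metis

lemma meet_closed: "x \<in> Pr D A \<Longrightarrow> y \<in> Pr D A \<Longrightarrow> meet D A x y \<in> Pr D A"
  and meet_le_left: "x \<in> Pr D A \<Longrightarrow> y \<in> Pr D A \<Longrightarrow> Le D A (meet D A x y) x"
  and meet_le_right: "x \<in> Pr D A \<Longrightarrow> y \<in> Pr D A \<Longrightarrow> Le D A (meet D A x y) y"
  and le_meetI: "x \<in> Pr D A \<Longrightarrow> y \<in> Pr D A \<Longrightarrow> z \<in> Pr D A \<Longrightarrow>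
      Le D A z x \<Longrightarrow> Le D A z y \<Longrightarrow> Le D A z (meet D A x y)"
  using is_meet_meet unfolding is_meet_def by blast+

lemma Re_meet:
  assumes f: "hom D f X A" and x: "x \<in> Pr D A" and y: "y \<in> Pr D A"
  shows "Re D f (meet D A x y) = meet D X (Re D f x) (Re D f y)"
  using tripos is_meet_meet[OF x y] f x y meet_eqI
  unfolding tripos_def heyting_hom_def Let_def hom_def by metis

definition himp :: "'o \<Rightarrow> 'p \<Rightarrow> 'p \<Rightarrow> 'p" where
  "himp A x y = (SOME z. is_imp D A x y z)"

lemma is_imp_himp: "x \<in> Pr D A \<Longrightarrow> y \<in> Pr D A \<Longrightarrow> is_imp D A x y (himp A x y)"
  using tripos unfolding tripos_def heyting_def himp_def by (metis someI)

lemma himp_closed: "x \<in> Pr D A \<Longrightarrow> y \<in> Pr D A \<Longrightarrow> himp A x y \<in> Pr D A"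
  using is_imp_himp unfolding is_imp_def by blast

lemma le_himp_iff:
  assumes "w \<in> Pr D A" "x \<in> Pr D A" "y \<in> Pr D A"
  shows "Le D A w (himp A x y) \<longleftrightarrow> Le D A (meet D A w x) y"
  using is_imp_himp[OF assms(2,3)] is_meet_meet[OF assms(1,2)] is_meet_unique assms(1)
  unfolding is_imp_def by metis

lemma himp_mp:
  assumes w: "w \<in> Pr D A" and x: "x \<in> Pr D A" and y: "y \<in> Pr D A"
    and "Le D A w (himp A x y)" and "Le D A w x"
  shows "Le D A w y"
  using assms le_himp_iff le_meetI[OF w x w le_refl[OF w]] le_trans meet_closed by meson

lemma Re_himp:
  assumes f: "hom D f X A" and x: "x \<in> Pr D A" and y: "y \<in> Pr D A"
  shows "Re D f (himp A x y) = himp X (Re D f x) (Re D f y)"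
proof -
  have "is_imp D X (Re D f x) (Re D f y) (Re D f (himp A x y))"
    using tripos f x y is_imp_himp[OF x y] unfolding tripos_def heyting_hom_def Let_def hom_def by blast
  then show ?thesis
    using is_imp_unique is_imp_himp Re_closed f x y by blast
qed

lemma Pi_pr2_Frobenius:
  "\<exists>\<Pi>. is_ladj D A (prd D X A) (Re D (pr2 D X A)) \<Pi> \<and>
     (\<forall>\<alpha>\<in>Pr D A. \<forall>\<beta>\<in>Pr D (prd D X A).
        \<Pi> (himp (prd D X A) (Re D (pr2 D X A) \<alpha>) \<beta>) = himp A \<alpha> (\<Pi> \<beta>))"
proof -
  let ?p = "pr2 D X A" and ?B = "prd D X A"
  obtain Pi where "\<forall>f. projection D f \<longrightarrow> is_ladj D (ccod D f) (cdom D f) (Re D f) (Pi f)"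
    using tripos unfolding tripos_def by blast
  then have adj: "is_ladj D A ?B (Re D ?p) (Pi ?p)"
    using hom_pr2[of X A] unfolding projection_def hom_def by metis
  have Pi: "\<And>y. y \<in> Pr D ?B \<Longrightarrow> Pi ?p y \<in> Pr D A"
    using adj unfolding is_ladj_def by blast
  have "Pi ?p (himp ?B (Re D ?p \<alpha>) \<beta>) = himp A \<alpha> (Pi ?p \<beta>)"
    if \<alpha>: "\<alpha> \<in> Pr D A" and \<beta>: "\<beta> \<in> Pr D ?B" for \<alpha> \<beta>
  proof (rule eq_iff_same_lower_bounds)
    have p\<alpha>: "Re D ?p \<alpha> \<in> Pr D ?B"
      using Re_closed[OF hom_pr2 \<alpha>] .
    then show "Pi ?p (himp ?B (Re D ?p \<alpha>) \<beta>) \<in> Pr D A"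
      using Pi himp_closed \<beta> by blast
    show "himp A \<alpha> (Pi ?p \<beta>) \<in> Pr D A"
      using himp_closed Pi \<alpha> \<beta> by blast
    fix w assume w: "w \<in> Pr D A"
    have pw: "Re D ?p w \<in> Pr D ?B"
      using Re_closed[OF hom_pr2 w] .
    have "Le D A w (Pi ?p (himp ?B (Re D ?p \<alpha>) \<beta>)) \<longleftrightarrow> Le D ?B (Re D ?p w) (himp ?B (Re D ?p \<alpha>) \<beta>)"
      using adj w himp_closed p\<alpha> \<beta> unfolding is_ladj_def by blast
    also have "\<dots> \<longleftrightarrow> Le D ?B (Re D ?p (meet D A w \<alpha>)) \<beta>"
      using le_himp_iff[OF pw p\<alpha> \<beta>] Re_meet[OF hom_pr2 w \<alpha>] by simp
    also have "\<dots> \<longleftrightarrow> Le D A (meet D A w \<alpha>) (Pi ?p \<beta>)"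
      using adj meet_closed[OF w \<alpha>] \<beta> unfolding is_ladj_def by blast
    also have "\<dots> \<longleftrightarrow> Le D A w (himp A \<alpha> (Pi ?p \<beta>))"
      using le_himp_iff w \<alpha> Pi \<beta> by blast
    finally show "Le D A w (Pi ?p (himp ?B (Re D ?p \<alpha>) \<beta>)) \<longleftrightarrow> Le D A w (himp A \<alpha> (Pi ?p \<beta>))" .
  qed
  then show ?thesis
    using adj by blast
qed

lemma himp_S:
  assumes \<phi>: "\<phi> \<in> Pr D A" and \<psi>: "\<psi> \<in> Pr D A" and \<gamma>: "\<gamma> \<in> Pr D A"
  shows "Le D A (himp A \<gamma> (himp A \<phi> \<psi>)) (himp A (himp A \<gamma> \<phi>) (himp A \<gamma> \<psi>))"
proof -
  let ?u = "himp A \<gamma> (himp A \<phi> \<psi>)" and ?v = "himp A \<gamma> \<phi>"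
  let ?m = "meet D A (meet D A ?u ?v) \<gamma>"
  have u: "?u \<in> Pr D A" and v: "?v \<in> Pr D A" and \<phi>\<psi>: "himp A \<phi> \<psi> \<in> Pr D A"
    using himp_closed \<phi> \<psi> \<gamma> by blast+
  have uv: "meet D A ?u ?v \<in> Pr D A" and m: "?m \<in> Pr D A"
    using meet_closed u v \<gamma> by blast+
  have m\<gamma>: "Le D A ?m \<gamma>" and mu: "Le D A ?m ?u" and mv: "Le D A ?m ?v"
    using meet_le_right[OF uv \<gamma>] le_trans[OF m uv _ meet_le_left[OF uv \<gamma>]]
      meet_le_left[OF u v] meet_le_right[OF u v] u v by blast+
  have "Le D A ?m \<psi>"
    using himp_mp[OF m \<phi> \<psi> himp_mp[OF m \<gamma> \<phi>\<psi> mu m\<gamma>] himp_mp[OF m \<gamma> \<phi> mv m\<gamma>]] .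
  then show ?thesis
    using le_himp_iff[OF uv \<gamma> \<psi>] le_himp_iff[OF u v himp_closed[OF \<gamma> \<psi>]] by blast
qed

lemma implicational_with_himp: "implicational_with D himp"
  unfolding implicational_with_def
proof (intro conjI allI ballI impI)
  fix A \<phi> \<psi> \<gamma> assume \<phi>: "\<phi> \<in> Pr D A" and \<psi>: "\<psi> \<in> Pr D A" and \<gamma>: "\<gamma> \<in> Pr D A"
  show "Le D A \<phi> (himp A \<psi> \<phi>)"
    using le_himp_iff \<phi> \<psi> meet_le_left by blast
  show "Le D A (himp A \<gamma> (himp A \<phi> \<psi>)) (himp A (himp A \<gamma> \<phi>) (himp A \<gamma> \<psi>))"
    using himp_S \<phi> \<psi> \<gamma> by blast
  show "Le D A \<gamma> \<psi>" if "Le D A \<gamma> (himp A \<phi> \<psi>) \<and> Le D A \<gamma> \<phi>"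
    using himp_mp \<gamma> \<phi> \<psi> that by blast
  show "Le D A \<gamma> (himp A \<phi> \<psi>)" if "Le D A \<phi> \<psi>"
    using le_himp_iff \<gamma> \<phi> \<psi> that le_trans meet_closed meet_le_right by meson
qed (use himp_closed Re_himp Pi_pr2_Frobenius in \<open>auto simp: hom_def\<close>)

end

theorem mainTheorem16:
  fixes D :: "('o,'a,'p) doctrine"
  assumes "doctrine D" and "heaco D"
  shows "implicational D \<longleftrightarrow> tripos D"
proof
  assume "implicational D"
  then obtain imp where imp: "implicational_with D imp"
    using implicational_iff_implicational_with by blast
  obtain \<delta> eps1 eps2 cc where eaco: "eaco_with D \<delta> eps1 eps2 cc" and "higher_order D"
    using assms(2) unfolding heaco_def by blast
  have el: "elementary_with D \<delta>" and cc: "co_comprehension D cc" "full_cc D cc"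
    and ac: "AC D eps1 eps2"
    using eaco unfolding eaco_with_def by blast+
  have "primary D"
    using el unfolding elementary_with_def by blast
  with assms(1) imp el cc ac interpret implicational_heaco D imp cc \<delta> eps1 eps2
    by unfold_locales
  show "tripos D"
    using tripos \<open>higher_order D\<close> by blast
next
  assume "tripos D"
  then interpret tripos_doctrine D
    using assms(1) by unfold_locales
  show "implicational D"
    using implicational_with_himp implicational_iff_implicational_with by blast
qed

end
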